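(* Let $\mathcal L$ be a non-trivial geometric lattice. Every modular diagram $(\mathcal E,\iota,J)$ of $\mathcal L$ with $J$ non-empty and $\iota^{-1}((\bigvee J)\wedge F_\iota)=\hat0$ is zero in $\mathcal{MD}(\mathcal L)$. Consequently the grading-$\hat0$ part $\mathcal{MD}(\mathcal L,\hat0)$ is one-dimensional, concentrated in degree $0$, and spanned by the class of the empty diagram $(\mathcal L,\mathrm{id}_{\mathcal L},\emptyset)$.
   Context: Geometric lattices. A geometric lattice is a finite lattice $\mathcal L$ (bottom $\hat0$, top $\hat1$, join $\vee$, meet $\wedge$) which is ranked (all maximal chains from $\hat0$ to a given element $F$ have the same length $\mathrm{rk}(F)$), atomic (every element is a join of atoms, i.e. rank-one elements) and semimodular ($\mathrm{rk}(F_1\wedge F_2)+\mathrm{rk}(F_1\vee F_2)\le\mathrm{rk}(F_1)+\mathrm{rk}(F_2)$). Elements are called flats, $\mathrm{At}(\mathcal L)$ denotes the set of atoms, and $\mathcal L$ is non-trivial if it has at least two elements. For a finite family $J$ of atoms, $\bigvee J$ is its join ($\bigvee\emptyset=\hat0$). Every interval $[F_1,F_2]$ is a geometric lattice, and products of geometric lattices are geometric lattices. A flat $F$ is modular if $\mathrm{rk}(F\wedge F')+\mathrm{rk}(F\vee F')=\mathrm{rk}(F)+\mathrm{rk}(F')$ for every flat $F'$. An embedding $\varphi:\mathcal L_1\to\mathcal L_2$ of geometric lattices is an injective order-preserving map preserving joins and sending atoms to atoms. Modular diagrams. Let $\mathcal L$ be a non-trivial geometric lattice. A modular extension of $\mathcal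 L$ is a pair $(\mathcal E,\iota)$ where $\mathcal E$ is a geometric lattice and $\iota:\mathcal L\to\mathcal E$ is an embedding whose image is an interval $[\hat0,F_\iota]$ with $F_\iota$ a modular flat of $\mathcal E$. A modular diagram of $\mathcal L$ is a triple $\Gamma=(\mathcal E,\iota,J)$ with $(\mathcal E,\iota)$ a modular extension and $J=(H_1,\dots,H_n)$ a finite word in the alphabet $\mathrm{At}(\mathcal E)$; its degree is $\deg\Gamma=n-2\big(\mathrm{rk}\bigvee J-\mathrm{rk}((\bigvee J)\wedge F_\iota)\big)$. $\mathcal{MD}(\mathcal L)$ is the $\mathbb Z$-graded $\mathbb Q$-vector space spanned by all modular diagrams, quotiented by the relations: (R1) $(\mathcal E,\iota,J)\sim-(\mathcal E,\iota,J')$ if $J'$ is obtained from $J$ by transposing two letters; (R2) $(\mathcal E,\iota,J)\sim(\mathcal E',\iota',J')$ if there is an embedding $\varphi:\mathcal E\to\mathcal E'$ with $\mathrm{rk}(\mathcal E)=\mathrm{rk}(\mathcal E')$, $\iota'=\varphi\circ\iota$ and $J'=\varphi(J)$ letterwise; (R3) $(\mathcal E,\iota,J)\sim0$ if $F_\iota\vee\bigvee J<\hat1_{\mathcal E}$; (R4) $(\mathcal E,\iota,J)\sim0$ if $\mathcal E\cong\mathcal E_1\times\mathcal E_2$ with $\mathcal E_1,\mathcal E_2$ non-trivial and $F_\iota\in\mathcal E_1\times\{\hat0\}$; (R5) $(\mathcal E,\iota,J)\sim0$ if there is a modular flat $F\ge F_\iota$ of $\mathcal E$ such that exactly two letters of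 $J$ are not below $F$. The grading-$\hat0$ part $\mathcal{MD}(\mathcal L,\hat0)$ is the span of classes of modular diagrams $(\mathcal E,\iota,J)$ with $\iota^{-1}((\bigvee J)\wedge F_\iota)=\hat0$. *)

theory Defs
  imports Complex_Main "HOL-Library.Function_Algebras"
begin

type_synonym 'b lat = "'b set \<times> ('b \<Rightarrow> 'b \<Rightarrow> bool)"

definition llt :: "'b lat \<Rightarrow> 'b \<Rightarrow> 'b \<Rightarrow> bool" where
  "llt L x y \<longleftrightarrow> snd L x y \<and> x \<noteq> y"

definition is_finite_lattice :: "'b lat \<Rightarrow> bool" where
  "is_finite_lattice L \<longleftrightarrow> finite (fst L) \<and> fst L \<noteq> {} \<and>
     (\<forall>x\<in>fst L. snd L x x) \<and>
     (\<forall>x\<in>fst L. \<forall>y\<in>fst L. snd L x y \<and> snd L y x \<longrightarrow> x = y) \<and>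
     (\<forall>x\<in>fst L. \<forall>y\<in>fst L. \<forall>z\<in>fst L. snd L x y \<and> snd L y z \<longrightarrow> snd L x z) \<and>
     (\<forall>x\<in>fst L. \<forall>y\<in>fst L. \<exists>z\<in>fst L. snd L x z \<and> snd L y z \<and>
        (\<forall>w\<in>fst L. snd L x w \<and> snd L y w \<longrightarrow> snd L z w)) \<and>
     (\<forall>x\<in>fst L. \<forall>y\<in>fst L. \<exists>z\<in>fst L. snd L z x \<and> snd L z y \<and>
        (\<forall>w\<in>fst L. snd L w x \<and> snd L w y \<longrightarrow> snd L w z))"

definition ljoin :: "'b lat \<Rightarrow> 'b \<Rightarrow> 'b \<Rightarrow> 'b" where
  "ljoin L x y = (THE z. z \<in> fst L \<and> snd L x z \<and> snd L y z \<and>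
        (\<forall>w\<in>fst L. snd L x w \<and> snd L y w \<longrightarrow> snd L z w))"

definition lmeet :: "'b lat \<Rightarrow> 'b \<Rightarrow> 'b \<Rightarrow> 'b" where
  "lmeet L x y = (THE z. z \<in> fst L \<and> snd L z x \<and> snd L z y \<and>
        (\<forall>w\<in>fst L. snd L w x \<and> snd L w y \<longrightarrow> snd L w z))"

definition lbot :: "'b lat \<Rightarrow> 'b" where
  "lbot L = (THE z. z \<in> fst L \<and> (\<forall>x\<in>fst L. snd L z x))"

definition ltop :: "'b lat \<Rightarrow> 'b" where
  "ltop L = (THE z. z \<in> fst L \<and> (\<forall>x\<in>fst L. snd L x z))"

definition joinL :: "'b lat \<Rightarrow> 'b list \<Rightarrow> 'b" where
  "joinL L J = foldr (ljoin L) J (lbot L)"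

definition covers :: "'b lat \<Rightarrow> 'b \<Rightarrow> 'b \<Rightarrow> bool" where
  "covers L x y \<longleftrightarrow> x \<in> fst L \<and> y \<in> fst L \<and> llt L x y \<and>
      \<not> (\<exists>z\<in>fst L. llt L x z \<and> llt L z y)"

text \<open>A maximal chain from the bottom to F, listed as bottom = c0 < c1 < ... < ck = F
  with consecutive elements in covering relation; its length is k.\<close>
definition max_chain :: "'b lat \<Rightarrow> 'b \<Rightarrow> 'b list \<Rightarrow> bool" where
  "max_chain L F c \<longleftrightarrow> c \<noteq> [] \<and> hd c = lbot L \<and> last c = F \<and>
      (\<forall>i. Suc i < length c \<longrightarrow> covers L (c ! i) (c ! Suc i))"

definition ranked :: "'b lat \<Rightarrow> bool" where
  "ranked L \<longleftrightarrow> (\<forall>F\<in>fst L. \<forall>c c'. max_chain L F c \<and> max_chain L F c' \<longrightarrow> length c = length c')"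

definition rk :: "'b lat \<Rightarrow> 'b \<Rightarrow> nat" where
  "rk L F = (SOME n. \<exists>c. max_chain L F c \<and> length c = Suc n)"

definition atoms :: "'b lat \<Rightarrow> 'b set" where
  "atoms L = {a \<in> fst L. rk L a = 1}"

definition atomic :: "'b lat \<Rightarrow> bool" where
  "atomic L \<longleftrightarrow> (\<forall>F\<in>fst L. \<exists>J. set J \<subseteq> atoms L \<and> F = joinL L J)"

definition semimodular :: "'b lat \<Rightarrow> bool" where
  "semimodular L \<longleftrightarrow> (\<forall>x\<in>fst L. \<forall>y\<in>fst L.
      rk L (lmeet L x y) + rk L (ljoin L x y) \<le> rk L x + rk L y)"

definition geometric_lattice :: "'b lat \<Rightarrow> bool" where
  "geometric_lattice L \<longleftrightarrow> is_finite_lattice L \<and> ranked L \<and> atomic L \<and> semimodular L"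

definition nontrivial_lattice :: "'b lat \<Rightarrow> bool" where
  "nontrivial_lattice L \<longleftrightarrow> 2 \<le> card (fst L)"

definition modular_flat :: "'b lat \<Rightarrow> 'b \<Rightarrow> bool" where
  "modular_flat L F \<longleftrightarrow> F \<in> fst L \<and> (\<forall>F'\<in>fst L.
      rk L (lmeet L F F') + rk L (ljoin L F F') = rk L F + rk L F')"

definition lattice_embedding :: "'b lat \<Rightarrow> 'c lat \<Rightarrow> ('b \<Rightarrow> 'c) \<Rightarrow> bool" where
  "lattice_embedding L1 L2 \<phi> \<longleftrightarrow> inj_on \<phi> (fst L1) \<and> \<phi> ` fst L1 \<subseteq> fst L2 \<and>
      (\<forall>x\<in>fst L1. \<forall>y\<in>fst L1. snd L1 x y \<longrightarrow> snd L2 (\<phi> x) (\<phi> y)) \<and>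
      (\<forall>x\<in>fst L1. \<forall>y\<in>fst L1. \<phi> (ljoin L1 x y) = ljoin L2 (\<phi> x) (\<phi> y)) \<and>
      \<phi> ` atoms L1 \<subseteq> atoms L2"

definition lattice_iso :: "'b lat \<Rightarrow> 'c lat \<Rightarrow> ('b \<Rightarrow> 'c) \<Rightarrow> bool" where
  "lattice_iso L1 L2 \<psi> \<longleftrightarrow> bij_betw \<psi> (fst L1) (fst L2) \<and>
      (\<forall>x\<in>fst L1. \<forall>y\<in>fst L1. snd L1 x y \<longleftrightarrow> snd L2 (\<psi> x) (\<psi> y))"

definition prod_lattice :: "'b lat \<Rightarrow> 'c lat \<Rightarrow> ('b \<times> 'c) lat" where
  "prod_lattice L1 L2 = (fst L1 \<times> fst L2,
      \<lambda>(x1, x2) (y1, y2). snd L1 x1 y1 \<and> snd L2 x2 y2)"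

text \<open>Ambient type of extensions: 'a + nat (infinite, so every finite lattice has a copy).\<close>

definition modular_extension :: "'a lat \<Rightarrow> ('a + nat) lat \<Rightarrow> ('a \<Rightarrow> 'a + nat) \<Rightarrow> bool" where
  "modular_extension L E \<iota> \<longleftrightarrow> geometric_lattice E \<and> lattice_embedding L E \<iota> \<and>
      (\<exists>F\<in>fst E. modular_flat E F \<and>
         \<iota> ` fst L = {x \<in> fst E. snd E (lbot E) x \<and> snd E x F})"

text \<open>The flat F_iota (the top of the interval image), i.e. the image of the top of L.\<close>
definition Fiota :: "'a lat \<Rightarrow> ('a \<Rightarrow> 'a + nat) \<Rightarrow> 'a + nat" where
  "Fiota L \<iota> = \<iota> (ltop L)"

type_synonym 'a diagram = "('a + nat) lat \<times> ('a \<Rightarrow> 'a + nat) \<times> ('a + nat) list"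

definition modular_diagram :: "'a lat \<Rightarrow> 'a diagram \<Rightarrow> bool" where
  "modular_diagram L D \<longleftrightarrow> (case D of (E, \<iota>, J) \<Rightarrow>
      modular_extension L E \<iota> \<and> set J \<subseteq> atoms E)"

definition diagram_degree :: "'a lat \<Rightarrow> 'a diagram \<Rightarrow> int" where
  "diagram_degree L D = (case D of (E, \<iota>, J) \<Rightarrow>
      int (length J) - 2 * (int (rk E (joinL E J)) - int (rk E (lmeet E (joinL E J) (Fiota L \<iota>)))))"

definition grading_zero :: "'a lat \<Rightarrow> 'a diagram \<Rightarrow> bool" where
  "grading_zero L D \<longleftrightarrow> (case D of (E, \<iota>, J) \<Rightarrow>
      the_inv_into (fst L) \<iota> (lmeet E (joinL E J) (Fiota L \<iota>)) = lbot L)"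

definition empty_diagram :: "'a lat \<Rightarrow> 'a diagram" where
  "empty_diagram L = ((Inl ` fst L,
      \<lambda>x y. \<exists>a b. x = Inl a \<and> y = Inl b \<and> snd L a b), Inl, [])"

definition rel_R1 :: "'a lat \<Rightarrow> 'a diagram \<Rightarrow> 'a diagram \<Rightarrow> bool" where
  "rel_R1 L D D' \<longleftrightarrow> modular_diagram L D \<and> modular_diagram L D' \<and>
      (\<exists>E \<iota> J i j. D = (E, \<iota>, J) \<and> i < length J \<and> j < length J \<and> i \<noteq> j \<and>
         D' = (E, \<iota>, J[i := J ! j, j := J ! i]))"

definition rel_R2 :: "'a lat \<Rightarrow> 'a diagram \<Rightarrow> 'a diagram \<Rightarrow> bool" where
  "rel_R2 L D D' \<longleftrightarrow> modular_diagram L D \<and> modular_diagram L D' \<and>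
      (\<exists>E \<iota> J E' \<iota>' J' \<phi>. D = (E, \<iota>, J) \<and> D' = (E', \<iota>', J') \<and>
         lattice_embedding E E' \<phi> \<and> rk E (ltop E) = rk E' (ltop E') \<and>
         (\<forall>x\<in>fst L. \<iota>' x = \<phi> (\<iota> x)) \<and> J' = map \<phi> J)"

definition zero_R3 :: "'a lat \<Rightarrow> 'a diagram \<Rightarrow> bool" where
  "zero_R3 L D \<longleftrightarrow> modular_diagram L D \<and> (case D of (E, \<iota>, J) \<Rightarrow>
      llt E (ljoin E (Fiota L \<iota>) (joinL E J)) (ltop E))"

definition zero_R4 :: "'a lat \<Rightarrow> 'a diagram \<Rightarrow> bool" where
  "zero_R4 L D \<longleftrightarrow> modular_diagram L D \<and> (case D of (E, \<iota>, J) \<Rightarrow>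
      (\<exists>(E1 :: ('a + nat) lat) (E2 :: ('a + nat) lat) \<psi>.
         geometric_lattice E1 \<and> geometric_lattice E2 \<and>
         nontrivial_lattice E1 \<and> nontrivial_lattice E2 \<and>
         lattice_iso E (prod_lattice E1 E2) \<psi> \<and>
         \<psi> (Fiota L \<iota>) \<in> fst E1 \<times> {lbot E2}))"

definition zero_R5 :: "'a lat \<Rightarrow> 'a diagram \<Rightarrow> bool" where
  "zero_R5 L D \<longleftrightarrow> modular_diagram L D \<and> (case D of (E, \<iota>, J) \<Rightarrow>
      (\<exists>F\<in>fst E. modular_flat E F \<and> snd E (Fiota L \<iota>) F \<and>
         card {i. i < length J \<and> \<not> snd E (J ! i) F} = 2))"

definition md_basis :: "'a diagram \<Rightarrow> ('a diagram \<Rightarrow> rat)" where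
  "md_basis D = (\<lambda>X. if X = D then 1 else 0)"

definition md_relations :: "'a lat \<Rightarrow> ('a diagram \<Rightarrow> rat) set" where
  "md_relations L =
     {md_basis D + md_basis D' | D D'. rel_R1 L D D'} \<union>
     {md_basis D - md_basis D' | D D'. rel_R2 L D D'} \<union>
     {md_basis D | D. zero_R3 L D \<or> zero_R4 L D \<or> zero_R5 L D}"

text \<open>The subspace spanned by the relations; a diagram is zero in MD(L) iff its
  basis vector lies in it.\<close>
definition md_relspan :: "'a lat \<Rightarrow> ('a diagram \<Rightarrow> rat) set" where
  "md_relspan L = module.span (\<lambda>(c::rat) (f :: 'a diagram \<Rightarrow> rat) X. c * f X) (md_relations L)"

end

theory Submission
  imports Defs
begin

text \<open>Let (E, \<iota>, J) be a modular diagram of grading 0, F = F\<iota> and G = \<Or>J, so that G \<and> F = 0.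
  If F \<or> G < 1 the diagram vanishes by R3. Otherwise, F being modular, (x, y) \<mapsto> x \<or> y embeds
  [0, F] \<times> [0, G] into E, and rk (F \<or> G) = rk F + rk G makes the ranks agree; so by R2 the diagram
  equals one on this product, in which F becomes (F, 0). For J non-empty both factors are
  non-trivial and R4 kills it. An empty diagram is zero by R3 unless F = 1, and then it equals
  (L, id, \<emptyset>) by R2. Finally (L, id, \<emptyset>) is non-zero: summing the coefficients of the empty
  diagrams with F\<iota> = 1 gives a linear functional vanishing on all relations, as R2 preserves
  this class of diagrams while R1, R3, R4 and R5 never involve it.\<close>

lemma finite_has_minimal_wrt:
  assumes "finite S" "m0 \<in> S"
    and antisym: "\<And>x y. x \<in> S \<Longrightarrow> y \<in> S \<Longrightarrow> R x y \<Longrightarrow> R y x \<Longrightarrow> x = y"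
    and trans: "\<And>x y z. x \<in> S \<Longrightarrow> y \<in> S \<Longrightarrow> z \<in> S \<Longrightarrow> R x y \<Longrightarrow> R y z \<Longrightarrow> R x z"
  shows "\<exists>m\<in>S. \<forall>z\<in>S. R z m \<longrightarrow> z = m"
proof -
  define r where "r = {(x, y). x \<in> S \<and> y \<in> S \<and> R x y \<and> x \<noteq> y}"
  have "r \<subseteq> S \<times> S" unfolding r_def by blast
  then have "finite r" using assms(1) by (simp add: finite_subset)
  have "trans r" unfolding r_def trans_def using antisym trans by blast
  then have "acyclic r" unfolding acyclic_irrefl trancl_id[OF \<open>trans r\<close>] by (simp add: r_def irrefl_def)
  with \<open>finite r\<close> have "wf r" by (rule finite_acyclic_wf)
  then obtain m where "m \<in> S" and min: "\<And>y. (y, m) \<in> r \<Longrightarrow> y \<notin> S"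
    using wfE_min[OF _ assms(2)] by metis
  then show ?thesis unfolding r_def by blast
qed

lemma is_finite_latticeI:
  assumes "finite C" "C \<noteq> {}"
    and "\<And>x. x \<in> C \<Longrightarrow> le x x"
    and "\<And>x y. x \<in> C \<Longrightarrow> y \<in> C \<Longrightarrow> le x y \<Longrightarrow> le y x \<Longrightarrow> x = y"
    and "\<And>x y z. x \<in> C \<Longrightarrow> y \<in> C \<Longrightarrow> z \<in> C \<Longrightarrow> le x y \<Longrightarrow> le y z \<Longrightarrow> le x z"
    and "\<And>x y. x \<in> C \<Longrightarrow> y \<in> C \<Longrightarrow> j x y \<in> C"
    and "\<And>x y. x \<in> C \<Longrightarrow> y \<in> C \<Longrightarrow> le x (j x y) \<and> le y (j x y)"
    and "\<And>x y w. x \<in> C \<Longrightarrow> y \<in> C \<Longrightarrow> w \<in> C \<Longrightarrow> le x w \<Longrightarrow> le y w \<Longrightarrow> le (j x y) w"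
    and "\<And>x y. x \<in> C \<Longrightarrow> y \<in> C \<Longrightarrow> m x y \<in> C"
    and "\<And>x y. x \<in> C \<Longrightarrow> y \<in> C \<Longrightarrow> le (m x y) x \<and> le (m x y) y"
    and "\<And>x y w. x \<in> C \<Longrightarrow> y \<in> C \<Longrightarrow> w \<in> C \<Longrightarrow> le w x \<Longrightarrow> le w y \<Longrightarrow> le w (m x y)"
  shows "is_finite_lattice (C, le)"
proof -
  have "\<forall>x\<in>C. \<forall>y\<in>C. \<exists>z\<in>C. le x z \<and> le y z \<and> (\<forall>w\<in>C. le x w \<and> le y w \<longrightarrow> le z w)"
    using assms(6-8) by (intro ballI bexI) blast+
  moreover have "\<forall>x\<in>C. \<forall>y\<in>C. \<exists>z\<in>C. le z x \<and> le z y \<and> (\<forall>w\<in>C. le w x \<and> le w y \<longrightarrow> le w z)"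
    using assms(9-11) by (intro ballI bexI) blast+
  moreover have "\<forall>x\<in>C. le x x" "\<forall>x\<in>C. \<forall>y\<in>C. le x y \<and> le y x \<longrightarrow> x = y"
    "\<forall>x\<in>C. \<forall>y\<in>C. \<forall>z\<in>C. le x y \<and> le y z \<longrightarrow> le x z"
    using assms(3-5) by blast+
  ultimately show ?thesis unfolding is_finite_lattice_def fst_conv snd_conv using assms(1,2) by (intro conjI)
qed

locale finite_lattice = fixes L :: "'b lat" assumes finite_lattice: "is_finite_lattice L"
begin

lemma lattice_axioms: "finite (fst L)" "fst L \<noteq> {}" "\<forall>x\<in>fst L. snd L x x"
  "\<forall>x\<in>fst L. \<forall>y\<in>fst L. snd L x y \<and> snd L y x \<longrightarrow> x = y"
  "\<forall>x\<in>fst L. \<forall>y\<in>fst L. \<forall>z\<in>fst L. snd L x y \<and> snd L y z \<longrightarrow> snd L x z"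
  "\<forall>x\<in>fst L. \<forall>y\<in>fst L. \<exists>z\<in>fst L. snd L x z \<and> snd L y z \<and>
     (\<forall>w\<in>fst L. snd L x w \<and> snd L y w \<longrightarrow> snd L z w)"
  "\<forall>x\<in>fst L. \<forall>y\<in>fst L. \<exists>z\<in>fst L. snd L z x \<and> snd L z y \<and>
     (\<forall>w\<in>fst L. snd L w x \<and> snd L w y \<longrightarrow> snd L w z)"
  using finite_lattice unfolding is_finite_lattice_def by - (elim conjE, assumption)+

lemma finite_carrier: "finite (fst L)"
  and carrier_nonempty: "fst L \<noteq> {}"
  and refl: "x \<in> fst L \<Longrightarrow> snd L x x"
  and antisym: "x \<in> fst L \<Longrightarrow> y \<in> fst L \<Longrightarrow> snd L x y \<Longrightarrow> snd L y x \<Longrightarrow> x = y"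
  and trans: "x \<in> fst L \<Longrightarrow> y \<in> fst L \<Longrightarrow> z \<in> fst L \<Longrightarrow> snd L x y \<Longrightarrow> snd L y z \<Longrightarrow> snd L x z"
  using lattice_axioms(1-5) by blast+

lemma ex_minimal:
  assumes "S \<subseteq> fst L" "x \<in> S"
  shows "\<exists>m\<in>S. \<forall>z\<in>S. snd L z m \<longrightarrow> z = m"
proof (rule finite_has_minimal_wrt[OF finite_subset[OF assms(1) finite_carrier] assms(2)])
  show "u = v" if "u \<in> S" "v \<in> S" "snd L u v" "snd L v u" for u v
    by (rule antisym) (use that assms(1) in auto)
  show "snd L u w" if "u \<in> S" "v \<in> S" "w \<in> S" "snd L u v" "snd L v w" for u v w
    by (rule trans[of u v w]) (use that assms(1) in auto)
qed

lemma ex_maximal: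
  assumes "S \<subseteq> fst L" "x \<in> S"
  shows "\<exists>m\<in>S. \<forall>z\<in>S. snd L m z \<longrightarrow> z = m"
proof (rule finite_has_minimal_wrt[OF finite_subset[OF assms(1) finite_carrier] assms(2)])
  show "u = v" if "u \<in> S" "v \<in> S" "snd L v u" "snd L u v" for u v
    by (rule antisym) (use that assms(1) in auto)
  show "snd L w u" if "u \<in> S" "v \<in> S" "w \<in> S" "snd L v u" "snd L w v" for u v w
    by (rule trans[of w v u]) (use that assms(1) in auto)
qed

lemma join_props:
  assumes "x \<in> fst L" "y \<in> fst L"
  shows "ljoin L x y \<in> fst L \<and> snd L x (ljoin L x y) \<and> snd L y (ljoin L x y) \<and>
        (\<forall>w\<in>fst L. snd L x w \<and> snd L y w \<longrightarrow> snd L (ljoin L x y) w)"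
  unfolding ljoin_def
proof (rule theI')
  obtain z where z: "z \<in> fst L" "snd L x z" "snd L y z" "\<forall>w\<in>fst L. snd L x w \<and> snd L y w \<longrightarrow> snd L z w"
    using lattice_axioms(6) assms by blast
  show "\<exists>!z. z \<in> fst L \<and> snd L x z \<and> snd L y z \<and> (\<forall>w\<in>fst L. snd L x w \<and> snd L y w \<longrightarrow> snd L z w)"
  proof (rule ex1I[of _ z])
    fix z' assume "z' \<in> fst L \<and> snd L x z' \<and> snd L y z' \<and> (\<forall>w\<in>fst L. snd L x w \<and> snd L y w \<longrightarrow> snd L z' w)"
    then show "z' = z" using z antisym by blast
  qed (use z in blast)
qed

lemma meet_props:
  assumes "x \<in> fst L" "y \<in> fst L"
  shows "lmeet L x y \<in> fst L \<and> snd L (lmeet L x y) x \<and> snd L (lmeet L x y) y \<and>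
        (\<forall>w\<in>fst L. snd L w x \<and> snd L w y \<longrightarrow> snd L w (lmeet L x y))"
  unfolding lmeet_def
proof (rule theI')
  obtain z where z: "z \<in> fst L" "snd L z x" "snd L z y" "\<forall>w\<in>fst L. snd L w x \<and> snd L w y \<longrightarrow> snd L w z"
    using lattice_axioms(7) assms by blast
  show "\<exists>!z. z \<in> fst L \<and> snd L z x \<and> snd L z y \<and> (\<forall>w\<in>fst L. snd L w x \<and> snd L w y \<longrightarrow> snd L w z)"
  proof (rule ex1I[of _ z])
    fix z' assume "z' \<in> fst L \<and> snd L z' x \<and> snd L z' y \<and> (\<forall>w\<in>fst L. snd L w x \<and> snd L w y \<longrightarrow> snd L w z')"
    then show "z' = z" using z antisym by blast
  qed (use z in blast)
qed

lemma join_closed[simp]: "x \<in> fst L \<Longrightarrow> y \<in> fst L \<Longrightarrow> ljoin L x y \<in> fst L"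
  and join_upper1: "x \<in> fst L \<Longrightarrow> y \<in> fst L \<Longrightarrow> snd L x (ljoin L x y)"
  and join_upper2: "x \<in> fst L \<Longrightarrow> y \<in> fst L \<Longrightarrow> snd L y (ljoin L x y)"
  and join_least: "x \<in> fst L \<Longrightarrow> y \<in> fst L \<Longrightarrow> w \<in> fst L \<Longrightarrow> snd L x w \<Longrightarrow> snd L y w \<Longrightarrow>
    snd L (ljoin L x y) w"
  using join_props by blast+

lemma meet_closed[simp]: "x \<in> fst L \<Longrightarrow> y \<in> fst L \<Longrightarrow> lmeet L x y \<in> fst L"
  and meet_lower1: "x \<in> fst L \<Longrightarrow> y \<in> fst L \<Longrightarrow> snd L (lmeet L x y) x"
  and meet_lower2: "x \<in> fst L \<Longrightarrow> y \<in> fst L \<Longrightarrow> snd L (lmeet L x y) y"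
  and meet_greatest: "x \<in> fst L \<Longrightarrow> y \<in> fst L \<Longrightarrow> w \<in> fst L \<Longrightarrow> snd L w x \<Longrightarrow> snd L w y \<Longrightarrow>
    snd L w (lmeet L x y)"
  using meet_props by blast+

lemma join_unique:
  assumes "x \<in> fst L" "y \<in> fst L" "z \<in> fst L" "snd L x z" "snd L y z"
    "\<And>w. w \<in> fst L \<Longrightarrow> snd L x w \<Longrightarrow> snd L y w \<Longrightarrow> snd L z w"
  shows "ljoin L x y = z"
proof -
  have "snd L (ljoin L x y) z" using assms join_least by blast
  moreover have "snd L z (ljoin L x y)" using assms(6)[of "ljoin L x y"] assms(1,2) join_closed join_upper1 join_upper2 by blast
  ultimately show ?thesis using antisym assms(1,2,3) join_closed by blast
qed

lemma meet_unique:
  assumes "x \<in> fst L" "y \<in> fst L" "z \<in> fst L" "snd L z x" "snd L z y"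
    "\<And>w. w \<in> fst L \<Longrightarrow> snd L w x \<Longrightarrow> snd L w y \<Longrightarrow> snd L w z"
  shows "lmeet L x y = z"
proof -
  have "snd L z (lmeet L x y)" using assms meet_greatest by blast
  moreover have "snd L (lmeet L x y) z" using assms(6)[of "lmeet L x y"] assms(1,2) meet_closed meet_lower1 meet_lower2 by blast
  ultimately show ?thesis using antisym assms(1,2,3) meet_closed by blast
qed

lemma join_eq_right: "x \<in> fst L \<Longrightarrow> y \<in> fst L \<Longrightarrow> snd L x y \<Longrightarrow> ljoin L x y = y"
  by (rule join_unique) (auto simp: refl)
lemma join_eq_left: "x \<in> fst L \<Longrightarrow> y \<in> fst L \<Longrightarrow> snd L y x \<Longrightarrow> ljoin L x y = x"
  by (rule join_unique) (auto simp: refl)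
lemma meet_eq_left: "x \<in> fst L \<Longrightarrow> y \<in> fst L \<Longrightarrow> snd L x y \<Longrightarrow> lmeet L x y = x"
  by (rule meet_unique) (auto simp: refl)
lemma meet_eq_right: "x \<in> fst L \<Longrightarrow> y \<in> fst L \<Longrightarrow> snd L y x \<Longrightarrow> lmeet L x y = y"
  by (rule meet_unique) (auto simp: refl)

lemma join_le_iff: "x \<in> fst L \<Longrightarrow> y \<in> fst L \<Longrightarrow> ljoin L x y = y \<longleftrightarrow> snd L x y"
  using join_eq_right join_upper1 by metis

lemma join_mono: "x \<in> fst L \<Longrightarrow> y \<in> fst L \<Longrightarrow> x' \<in> fst L \<Longrightarrow> y' \<in> fst L \<Longrightarrow>
   snd L x x' \<Longrightarrow> snd L y y' \<Longrightarrow> snd L (ljoin L x y) (ljoin L x' y')"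
  by (rule join_least) (auto intro: trans[OF _ _ _ _ join_upper1] trans[OF _ _ _ _ join_upper2])

lemma join_assoc: assumes "x \<in> fst L" "y \<in> fst L" "z \<in> fst L"
  shows "ljoin L (ljoin L x y) z = ljoin L x (ljoin L y z)"
proof (rule join_unique)
  have yz: "ljoin L y z \<in> fst L" using assms by simp
  have j: "ljoin L x (ljoin L y z) \<in> fst L" using assms by simp
  have "snd L y (ljoin L x (ljoin L y z))" using trans[OF _ yz j join_upper1 join_upper2] assms by simp
  then show "snd L (ljoin L x y) (ljoin L x (ljoin L y z))"
    using assms join_least join_upper1 j by simp
  show "snd L z (ljoin L x (ljoin L y z))" using trans[OF _ yz j join_upper2 join_upper2] assms by simp
  fix w assume w: "w \<in> fst L" "snd L (ljoin L x y) w" "snd L z w"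
  have "snd L x w" "snd L y w" using trans[OF _ _ w(1) join_upper1 w(2)] trans[OF _ _ w(1) join_upper2 w(2)] assms by auto
  then show "snd L (ljoin L x (ljoin L y z)) w" using assms w join_least by simp
qed (use assms in auto)

lemma join_comm: "x \<in> fst L \<Longrightarrow> y \<in> fst L \<Longrightarrow> ljoin L x y = ljoin L y x"
  by (rule join_unique) (auto simp: join_props)

lemma join_interchange:
  assumes "a \<in> fst L" "b \<in> fst L" "c \<in> fst L" "d \<in> fst L"
  shows "ljoin L (ljoin L a b) (ljoin L c d) = ljoin L (ljoin L a c) (ljoin L b d)"
proof -
  have "ljoin L b (ljoin L c d) = ljoin L c (ljoin L b d)"
    using join_assoc[of b c d] join_assoc[of c b d] join_comm[of b c] assms by simp
  then show ?thesis using join_assoc assms by simp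
qed

lemma bot_props: "lbot L \<in> fst L \<and> (\<forall>x\<in>fst L. snd L (lbot L) x)"
  unfolding lbot_def
proof (rule theI')
  obtain m where m: "m \<in> fst L" "\<forall>z\<in>fst L. snd L z m \<longrightarrow> z = m"
    using ex_minimal[OF order.refl] carrier_nonempty by blast
  have "snd L m x" if "x \<in> fst L" for x
    using m meet_props[OF m(1) that] by metis
  then show "\<exists>!z. z \<in> fst L \<and> (\<forall>x\<in>fst L. snd L z x)" using m(1) antisym by blast
qed

lemma top_props: "ltop L \<in> fst L \<and> (\<forall>x\<in>fst L. snd L x (ltop L))"
  unfolding ltop_def
proof (rule theI')
  obtain m where m: "m \<in> fst L" "\<forall>z\<in>fst L. snd L m z \<longrightarrow> z = m"
    using ex_maximal[OF order.refl] carrier_nonempty by blast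
  have "snd L x m" if "x \<in> fst L" for x
    using m join_props[OF m(1) that] by metis
  then show "\<exists>!z. z \<in> fst L \<and> (\<forall>x\<in>fst L. snd L x z)" using m(1) antisym by blast
qed

lemma bot_closed[simp]: "lbot L \<in> fst L"
  and top_closed[simp]: "ltop L \<in> fst L"
  and bot_least: "x \<in> fst L \<Longrightarrow> snd L (lbot L) x"
  and top_greatest: "x \<in> fst L \<Longrightarrow> snd L x (ltop L)"
  using bot_props top_props by blast+

lemma bot_unique: "b \<in> fst L \<Longrightarrow> \<forall>x\<in>fst L. snd L b x \<Longrightarrow> lbot L = b"
  and top_unique: "b \<in> fst L \<Longrightarrow> \<forall>x\<in>fst L. snd L x b \<Longrightarrow> ltop L = b"
  using antisym bot_props top_props by blast+

lemma join_bot_left: "x \<in> fst L \<Longrightarrow> ljoin L (lbot L) x = x"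
  and join_bot_right: "x \<in> fst L \<Longrightarrow> ljoin L x (lbot L) = x"
  and meet_bot_left: "x \<in> fst L \<Longrightarrow> lmeet L (lbot L) x = lbot L"
  and join_top_left: "x \<in> fst L \<Longrightarrow> ljoin L (ltop L) x = ltop L"
  and meet_top_left: "x \<in> fst L \<Longrightarrow> lmeet L (ltop L) x = x"
  using join_eq_right join_eq_left meet_eq_left meet_eq_right bot_least top_greatest by simp_all

lemma joinL_lub:
  assumes "set J \<subseteq> fst L"
  shows "joinL L J \<in> fst L \<and> (\<forall>x\<in>set J. snd L x (joinL L J)) \<and>
    (\<forall>w\<in>fst L. (\<forall>x\<in>set J. snd L x w) \<longrightarrow> snd L (joinL L J) w)"
  using assms
proof (induction J)
  case Nil
  then show ?case by (simp add: joinL_def bot_least)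
next
  case (Cons a J)
  have eq: "joinL L (a # J) = ljoin L a (joinL L J)" by (simp add: joinL_def)
  have a: "a \<in> fst L" and IH: "joinL L J \<in> fst L" "\<forall>x\<in>set J. snd L x (joinL L J)"
    "\<forall>w\<in>fst L. (\<forall>x\<in>set J. snd L x w) \<longrightarrow> snd L (joinL L J) w" using Cons by auto
  have "snd L x (ljoin L a (joinL L J))" if "x \<in> set J" for x
  proof -
    have "x \<in> fst L" using that Cons.prems by auto
    then show ?thesis using trans[OF _ IH(1) join_closed[OF a IH(1)]] IH(2) that join_upper2[OF a IH(1)] by blast
  qed
  then have upper: "snd L x (ljoin L a (joinL L J))" if "x \<in> set (a # J)" for x
    using that join_upper1[OF a IH(1)] by auto
  show ?case unfolding eq
  proof (intro conjI ballI impI)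
    show "ljoin L a (joinL L J) \<in> fst L" using a IH(1) by simp
    show "snd L x (ljoin L a (joinL L J))" if "x \<in> set (a # J)" for x using upper that .
    fix w assume "w \<in> fst L" "\<forall>x\<in>set (a # J). snd L x w"
    then show "snd L (ljoin L a (joinL L J)) w" using IH(3) join_least[OF a IH(1)] by simp
  qed
qed

lemma joinL_closed: "set J \<subseteq> fst L \<Longrightarrow> joinL L J \<in> fst L"
  and joinL_upper: "set J \<subseteq> fst L \<Longrightarrow> x \<in> set J \<Longrightarrow> snd L x (joinL L J)"
  using joinL_lub by blast+

lemma joinL_bots: "joinL L (map (\<lambda>_. lbot L) K) = lbot L"
  by (induction K) (auto simp: joinL_def join_bot_left)

lemma joinL_append_bots: "set J \<subseteq> fst L \<Longrightarrow> joinL L (J @ map (\<lambda>_. lbot L) K) = joinL L J"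
proof (induction J)
  case Nil then show ?case using joinL_bots by (simp add: joinL_def)
next
  case (Cons a J) then show ?case by (simp add: joinL_def)
qed

lemma joinL_bots_append: "set J \<subseteq> fst L \<Longrightarrow> joinL L (map (\<lambda>_. lbot L) K @ J) = joinL L J"
proof (induction K)
  case Nil then show ?case by simp
next
  case (Cons a K) then show ?case using joinL_closed[of J] by (simp add: joinL_def join_bot_left)
qed

lemma ex_cover_below:
  assumes x: "x \<in> fst L" and y: "y \<in> fst L" and lt: "llt L x y"
  shows "\<exists>z\<in>fst L. snd L x z \<and> covers L z y"
proof -
  let ?S = "{z\<in>fst L. snd L x z \<and> llt L z y}"
  have "x \<in> ?S" using x lt refl[OF x] by simp
  then obtain m where m: "m \<in> ?S" "\<forall>z\<in>?S. snd L m z \<longrightarrow> z = m"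
    using ex_maximal[of ?S x] by blast
  have "covers L m y"
    unfolding covers_def
  proof (intro conjI)
    show "m \<in> fst L" "y \<in> fst L" "llt L m y" using m y by auto
    show "\<not> (\<exists>z\<in>fst L. llt L m z \<and> llt L z y)"
    proof
      assume "\<exists>z\<in>fst L. llt L m z \<and> llt L z y"
      then obtain z where z: "z \<in> fst L" "llt L m z" "llt L z y" by blast
      have mS: "m \<in> fst L" "snd L x m" using m by auto
      have "snd L m z" using z(2) unfolding llt_def by blast
      then have "snd L x z" using trans[OF x mS(1) z(1) mS(2)] by blast
      then have "z \<in> ?S" using z by auto
      then have "z = m" using m(2) \<open>snd L m z\<close> by blast
      then show False using z(2) unfolding llt_def by blast
    qed
  qed
  then show ?thesis using m by blast
qed

lemma covers_iff: "covers L x y \<longleftrightarrow> x \<in> fst L \<and> y \<in> fst L \<and> snd L x y \<and> x \<noteq> y \<and>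
    (\<forall>z\<in>fst L. snd L x z \<and> snd L z y \<longrightarrow> z = x \<or> z = y)"
  unfolding covers_def llt_def by blast

lemma chain_bot: "max_chain L (lbot L) [lbot L]"
  unfolding max_chain_def by simp

lemma chain_snoc:
  assumes "max_chain L z c" "covers L z F"
  shows "max_chain L F (c @ [F])"
  unfolding max_chain_def
proof (intro conjI allI impI)
  show "c @ [F] \<noteq> []" by simp
  show "hd (c @ [F]) = lbot L" using assms(1) unfolding max_chain_def by simp
  show "last (c @ [F]) = F" by simp
  fix i assume i: "Suc i < length (c @ [F])"
  show "covers L ((c @ [F]) ! i) ((c @ [F]) ! Suc i)"
  proof (cases "Suc i < length c")
    case True
    then show ?thesis using assms(1) unfolding max_chain_def by (simp add: nth_append)
  next
    case False
    then have "Suc i = length c" using i by simp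
    moreover have "c ! i = z" using assms(1) \<open>Suc i = length c\<close> unfolding max_chain_def
      by (metis diff_Suc_1 last_conv_nth)
    ultimately show ?thesis using assms(2) by (simp add: nth_append)
  qed
qed

lemma chain_exists: "F \<in> fst L \<Longrightarrow> \<exists>c. max_chain L F c"
proof (induction "card {z\<in>fst L. llt L z F}" arbitrary: F rule: less_induct)
  case less
  show ?case
  proof (cases "F = lbot L")
    case True
    then show ?thesis using chain_bot by blast
  next
    case False
    then have "llt L (lbot L) F" using less.prems bot_least unfolding llt_def by auto
    then obtain z where z: "z \<in> fst L" "covers L z F"
      using ex_cover_below[OF bot_closed less.prems] by blast
    have zF: "snd L z F" "z \<noteq> F" using z unfolding covers_def llt_def by auto
    have smaller: "{w\<in>fst L. llt L w z} \<subset> {w\<in>fst L. llt L w F}"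
    proof
      show "{w\<in>fst L. llt L w z} \<subseteq> {w\<in>fst L. llt L w F}"
      proof
        fix w assume w: "w \<in> {w\<in>fst L. llt L w z}"
        then have "snd L w F" using trans[OF _ z(1) less.prems _ zF(1)] unfolding llt_def by auto
        moreover have "w \<noteq> F" using w zF antisym[OF z(1) less.prems zF(1)] unfolding llt_def by auto
        ultimately show "w \<in> {w\<in>fst L. llt L w F}" using w unfolding llt_def by auto
      qed
      have "z \<in> {w\<in>fst L. llt L w F}" "z \<notin> {w\<in>fst L. llt L w z}" using z(1) zF unfolding llt_def by auto
      then show "{w\<in>fst L. llt L w z} \<noteq> {w\<in>fst L. llt L w F}" by blast
    qed
    have "card {w\<in>fst L. llt L w z} < card {w\<in>fst L. llt L w F}"
      by (rule psubset_card_mono[OF _ smaller]) (rule finite_subset[OF _ finite_carrier], auto)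
    then obtain c where "max_chain L z c" using less.hyps z(1) by blast
    then show ?thesis using chain_snoc z(2) by blast
  qed
qed

definition graded :: "('b \<Rightarrow> nat) \<Rightarrow> bool" where
  "graded r \<longleftrightarrow> r (lbot L) = 0 \<and> (\<forall>x y. covers L x y \<longrightarrow> r y = Suc (r x))"

lemma graded_chain:
  assumes g: "graded r" and c: "max_chain L F c"
  shows "length c = Suc (r F)"
proof -
  have carrier_nonempty: "c \<noteq> []" and hd: "hd c = lbot L" and la: "last c = F"
    and cov: "\<And>i. Suc i < length c \<Longrightarrow> covers L (c ! i) (c ! Suc i)"
    using c unfolding max_chain_def by auto
  have r0: "r (lbot L) = 0" and rc: "\<And>x y. covers L x y \<Longrightarrow> r y = Suc (r x)"
    using g unfolding graded_def by auto
  have *: "i < length c \<Longrightarrow> r (c ! i) = i" for i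
  proof (induction i)
    case 0
    then show ?case using carrier_nonempty hd r0 by (simp add: hd_conv_nth)
  next
    case (Suc i)
    then show ?case using rc[OF cov[OF Suc.prems]] by simp
  qed
  have "F = c ! (length c - 1)" using carrier_nonempty la by (simp add: last_conv_nth)
  then have "r F = length c - 1" using *[of "length c - 1"] carrier_nonempty by simp
  then show ?thesis using carrier_nonempty by simp
qed

lemma graded_rk:
  assumes g: "graded r"
  shows "ranked L" "F \<in> fst L \<Longrightarrow> rk L F = r F"
proof -
  show "ranked L" unfolding ranked_def using graded_chain[OF g] by auto
  assume F: "F \<in> fst L"
  obtain c where c: "max_chain L F c" using chain_exists[OF F] by blast
  have ex: "\<exists>n c. max_chain L F c \<and> length c = Suc n" using c graded_chain[OF g c] by blast
  have "\<exists>c. max_chain L F c \<and> length c = Suc (rk L F)"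
    unfolding rk_def using someI_ex[OF ex] .
  then show "rk L F = r F" using graded_chain[OF g] by fastforce
qed

lemma ranked_chain:
  assumes rd: "ranked L" and F: "F \<in> fst L" and c: "max_chain L F c"
  shows "length c = Suc (rk L F)"
proof -
  have ex: "\<exists>n c. max_chain L F c \<and> length c = Suc n"
    using c unfolding max_chain_def by (metis length_0_conv not0_implies_Suc)
  obtain c' where "max_chain L F c'" "length c' = Suc (rk L F)"
    using someI_ex[OF ex] unfolding rk_def by blast
  then show ?thesis using rd F c unfolding ranked_def by metis
qed

lemma ranked_graded:
  assumes rd: "ranked L" shows "graded (rk L)"
  unfolding graded_def
proof (intro conjI allI impI)
  show "rk L (lbot L) = 0" using ranked_chain[OF rd bot_closed chain_bot] by simp
  fix x y assume xy: "covers L x y"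
  then have xC: "x \<in> fst L" and yC: "y \<in> fst L" unfolding covers_def by auto
  obtain c where c: "max_chain L x c" using chain_exists[OF xC] by blast
  have "length (c @ [y]) = Suc (rk L y)" using ranked_chain[OF rd yC chain_snoc[OF c xy]] .
  moreover have "length c = Suc (rk L x)" using ranked_chain[OF rd xC c] .
  ultimately show "rk L y = Suc (rk L x)" by simp
qed

lemma graded_strict:
  assumes g: "graded r" and "x \<in> fst L" "y \<in> fst L" "llt L x y"
  shows "r x < r y"
  using assms(2-4)
proof (induction "r y" arbitrary: y rule: less_induct)
  case less
  obtain z where z: "z \<in> fst L" "snd L x z" "covers L z y" using ex_cover_below[OF less.prems] by blast
  have rz: "r y = Suc (r z)" using g z(3) unfolding graded_def by blast
  have "r x \<le> r z"
  proof (cases "x = z")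
    case False
    then have "llt L x z" using z unfolding llt_def by auto
    then show ?thesis using less.hyps[of z] rz z(1) less.prems(1) by fastforce
  qed simp
  then show ?case using rz by simp
qed

lemma graded_mono: "graded r \<Longrightarrow> x \<in> fst L \<Longrightarrow> y \<in> fst L \<Longrightarrow> snd L x y \<Longrightarrow> r x \<le> r y"
  using graded_strict unfolding llt_def by fastforce

lemma graded_eq: "graded r \<Longrightarrow> x \<in> fst L \<Longrightarrow> y \<in> fst L \<Longrightarrow> snd L x y \<Longrightarrow> r y \<le> r x \<Longrightarrow> x = y"
  using graded_strict unfolding llt_def by fastforce

lemma graded_zero: "graded r \<Longrightarrow> x \<in> fst L \<Longrightarrow> r x = 0 \<longleftrightarrow> x = lbot L"
  using graded_eq[of r "lbot L" x] bot_least by (auto simp: graded_def)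

lemma nontrivial_iff_top_ne_bot: "nontrivial_lattice L \<longleftrightarrow> ltop L \<noteq> lbot L"
proof
  assume "nontrivial_lattice L"
  show "ltop L \<noteq> lbot L"
  proof
    assume "ltop L = lbot L"
    then have "fst L \<subseteq> {lbot L}" using antisym bot_least top_greatest by fastforce
    then have "card (fst L) \<le> 1" using card_mono[of "{lbot L}" "fst L"] by simp
    then show False using \<open>nontrivial_lattice L\<close> unfolding nontrivial_lattice_def by simp
  qed
next
  assume "ltop L \<noteq> lbot L"
  then show "nontrivial_lattice L"
    unfolding nontrivial_lattice_def using card_mono[OF finite_carrier, of "{ltop L, lbot L}"] by simp
qed

end

locale geometric = finite_lattice + assumes geometric: "geometric_lattice L"
begin
lemma ranked: "ranked L" using geometric unfolding geometric_lattice_def by blast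
lemma atomic: "atomic L" using geometric unfolding geometric_lattice_def by blast
lemma semimodular: "semimodular L" using geometric unfolding geometric_lattice_def by blast
lemma rk_graded: "graded (rk L)" using ranked_graded[OF ranked] .
lemma rk_bot[simp]: "rk L (lbot L) = 0" using rk_graded unfolding graded_def by blast
lemma rk_cover: "covers L x y \<Longrightarrow> rk L y = Suc (rk L x)" using rk_graded unfolding graded_def by blast
lemma rk_strict: "x \<in> fst L \<Longrightarrow> y \<in> fst L \<Longrightarrow> llt L x y \<Longrightarrow> rk L x < rk L y" using graded_strict[OF rk_graded] .
lemma rk_mono: "x \<in> fst L \<Longrightarrow> y \<in> fst L \<Longrightarrow> snd L x y \<Longrightarrow> rk L x \<le> rk L y" using graded_mono[OF rk_graded] .
lemma rk_eq: "x \<in> fst L \<Longrightarrow> y \<in> fst L \<Longrightarrow> snd L x y \<Longrightarrow> rk L y \<le> rk L x \<Longrightarrow> x = y" using graded_eq[OF rk_graded] .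
lemma rk_zero: "x \<in> fst L \<Longrightarrow> rk L x = 0 \<longleftrightarrow> x = lbot L" using graded_zero[OF rk_graded] .
lemma rk_semimodular: "x \<in> fst L \<Longrightarrow> y \<in> fst L \<Longrightarrow> rk L (lmeet L x y) + rk L (ljoin L x y) \<le> rk L x + rk L y"
  using semimodular unfolding semimodular_def by blast
end

lemma geometricI: "geometric_lattice L \<Longrightarrow> geometric L"
  unfolding geometric_def geometric_axioms_def finite_lattice_def geometric_lattice_def by blast

locale lattice_isomorphism = finite_lattice L1 for L1 :: "'b lat" + fixes L2 :: "'c lat" and \<psi> :: "'b \<Rightarrow> 'c"
  assumes iso: "lattice_iso L1 L2 \<psi>"
begin

lemma bij: "bij_betw \<psi> (fst L1) (fst L2)" using iso unfolding lattice_iso_def by blast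
lemma le_iff: "x \<in> fst L1 \<Longrightarrow> y \<in> fst L1 \<Longrightarrow> snd L2 (\<psi> x) (\<psi> y) \<longleftrightarrow> snd L1 x y"
  using iso unfolding lattice_iso_def by blast
lemma carrier_image: "fst L2 = \<psi> ` fst L1" using bij by (simp add: bij_betw_def)
lemma inj: "inj_on \<psi> (fst L1)" using bij by (simp add: bij_betw_def)
lemma in_carrier: "x \<in> fst L1 \<Longrightarrow> \<psi> x \<in> fst L2" using carrier_image by blast

definition inv\<psi> where "inv\<psi> = the_inv_into (fst L1) \<psi>"
lemma inv_apply: "x \<in> fst L1 \<Longrightarrow> inv\<psi> (\<psi> x) = x" unfolding inv\<psi>_def using the_inv_into_f_f[OF inj] .
lemma apply_inv: "u \<in> fst L2 \<Longrightarrow> \<psi> (inv\<psi> u) = u" unfolding inv\<psi>_def using f_the_inv_into_f[OF inj] carrier_image by blast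
lemma inv_in_carrier: "u \<in> fst L2 \<Longrightarrow> inv\<psi> u \<in> fst L1" unfolding inv\<psi>_def using the_inv_into_into[OF inj] carrier_image by blast

lemma le_iff_inv: "u \<in> fst L2 \<Longrightarrow> v \<in> fst L2 \<Longrightarrow> snd L2 u v \<longleftrightarrow> snd L1 (inv\<psi> u) (inv\<psi> v)"
  using le_iff[OF inv_in_carrier inv_in_carrier] apply_inv by simp

lemma target_finite_lattice: "finite_lattice L2"
  unfolding finite_lattice_def
proof (rule is_finite_latticeI[of "fst L2" "snd L2" "\<lambda>u v. \<psi> (ljoin L1 (inv\<psi> u) (inv\<psi> v))"
      "\<lambda>u v. \<psi> (lmeet L1 (inv\<psi> u) (inv\<psi> v))", unfolded prod.collapse])
  show "finite (fst L2)" "fst L2 \<noteq> {}" using carrier_image finite_carrier carrier_nonempty by auto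
  fix u v w assume uvw: "u \<in> fst L2" "v \<in> fst L2" "w \<in> fst L2"
  note iff = le_iff_inv[OF uvw(1) uvw(2)] le_iff_inv[OF uvw(2) uvw(1)] le_iff_inv[OF uvw(1) uvw(3)]
    le_iff_inv[OF uvw(2) uvw(3)] le_iff_inv[OF uvw(3) uvw(1)] le_iff_inv[OF uvw(3) uvw(2)]
  have le: "snd L2 w (\<psi> x) \<longleftrightarrow> snd L1 (inv\<psi> w) x" "snd L2 (\<psi> x) w \<longleftrightarrow> snd L1 x (inv\<psi> w)"
    if "x \<in> fst L1" for x
    using that le_iff_inv[OF uvw(3) in_carrier] le_iff_inv[OF in_carrier uvw(3)] inv_apply by simp_all
  have x: "inv\<psi> u \<in> fst L1" "inv\<psi> v \<in> fst L1" "inv\<psi> w \<in> fst L1" using inv_in_carrier uvw by auto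
  show "snd L2 u u" using le_iff_inv[OF uvw(1) uvw(1)] refl x by simp
  show "snd L2 u v \<Longrightarrow> snd L2 v u \<Longrightarrow> u = v" using iff antisym x apply_inv uvw by metis
  show "snd L2 u v \<Longrightarrow> snd L2 v w \<Longrightarrow> snd L2 u w" using iff trans x by metis
  show "\<psi> (ljoin L1 (inv\<psi> u) (inv\<psi> v)) \<in> fst L2" "\<psi> (lmeet L1 (inv\<psi> u) (inv\<psi> v)) \<in> fst L2"
    using x in_carrier by simp_all
  show "snd L2 u (\<psi> (ljoin L1 (inv\<psi> u) (inv\<psi> v))) \<and> snd L2 v (\<psi> (ljoin L1 (inv\<psi> u) (inv\<psi> v)))"
    using x uvw le_iff_inv in_carrier inv_apply join_upper1 join_upper2 by simp
  show "snd L2 (\<psi> (lmeet L1 (inv\<psi> u) (inv\<psi> v))) u \<and> snd L2 (\<psi> (lmeet L1 (inv\<psi> u) (inv\<psi> v))) v"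
    using x uvw le_iff_inv in_carrier inv_apply meet_lower1 meet_lower2 by simp
  show "snd L2 u w \<Longrightarrow> snd L2 v w \<Longrightarrow> snd L2 (\<psi> (ljoin L1 (inv\<psi> u) (inv\<psi> v))) w"
    using x iff le join_least by simp
  show "snd L2 w u \<Longrightarrow> snd L2 w v \<Longrightarrow> snd L2 w (\<psi> (lmeet L1 (inv\<psi> u) (inv\<psi> v)))"
    using x iff le meet_greatest by simp
qed

sublocale B: finite_lattice L2 by (rule target_finite_lattice)

lemma map_join: "x \<in> fst L1 \<Longrightarrow> y \<in> fst L1 \<Longrightarrow> \<psi> (ljoin L1 x y) = ljoin L2 (\<psi> x) (\<psi> y)"
proof (rule B.join_unique[symmetric])
  assume xy: "x \<in> fst L1" "y \<in> fst L1"
  show "snd L2 (\<psi> x) (\<psi> (ljoin L1 x y))" "snd L2 (\<psi> y) (\<psi> (ljoin L1 x y))"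
    using xy le_iff join_upper1 join_upper2 by auto
  fix w assume w: "w \<in> fst L2" "snd L2 (\<psi> x) w" "snd L2 (\<psi> y) w"
  then obtain z where "z \<in> fst L1" "w = \<psi> z" using carrier_image by auto
  then show "snd L2 (\<psi> (ljoin L1 x y)) w" using w xy le_iff join_least by simp
qed (auto simp: in_carrier)

lemma map_meet: "x \<in> fst L1 \<Longrightarrow> y \<in> fst L1 \<Longrightarrow> \<psi> (lmeet L1 x y) = lmeet L2 (\<psi> x) (\<psi> y)"
proof (rule B.meet_unique[symmetric])
  assume xy: "x \<in> fst L1" "y \<in> fst L1"
  show "snd L2 (\<psi> (lmeet L1 x y)) (\<psi> x)" "snd L2 (\<psi> (lmeet L1 x y)) (\<psi> y)"
    using xy le_iff meet_lower1 meet_lower2 by auto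
  fix w assume w: "w \<in> fst L2" "snd L2 w (\<psi> x)" "snd L2 w (\<psi> y)"
  then obtain z where "z \<in> fst L1" "w = \<psi> z" using carrier_image by auto
  then show "snd L2 w (\<psi> (lmeet L1 x y))" using w xy le_iff meet_greatest by simp
qed (auto simp: in_carrier)

lemma map_bot: "\<psi> (lbot L1) = lbot L2"
  by (rule B.bot_unique[symmetric]) (auto simp: in_carrier carrier_image le_iff bot_least)
lemma map_top: "\<psi> (ltop L1) = ltop L2"
  by (rule B.top_unique[symmetric]) (auto simp: in_carrier carrier_image le_iff top_greatest)

lemma llt_iff: "x \<in> fst L1 \<Longrightarrow> y \<in> fst L1 \<Longrightarrow> llt L2 (\<psi> x) (\<psi> y) \<longleftrightarrow> llt L1 x y"
  unfolding llt_def using le_iff inj by (auto simp: inj_on_eq_iff)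

lemma covers_iff: "x \<in> fst L1 \<Longrightarrow> y \<in> fst L1 \<Longrightarrow> covers L2 (\<psi> x) (\<psi> y) \<longleftrightarrow> covers L1 x y"
  unfolding covers_def using llt_iff in_carrier carrier_image by auto

lemma graded_transfer: "graded r \<Longrightarrow> B.graded (\<lambda>u. r (inv\<psi> u))"
  unfolding graded_def B.graded_def
proof (intro conjI allI impI)
  assume g: "r (lbot L1) = 0 \<and> (\<forall>x y. covers L1 x y \<longrightarrow> r y = Suc (r x))"
  show "r (inv\<psi> (lbot L2)) = 0" using g map_bot[symmetric] inv_apply bot_closed by simp
  fix u v assume uv: "covers L2 u v"
  then have "u \<in> fst L2" "v \<in> fst L2" unfolding covers_def by auto
  then have "covers L1 (inv\<psi> u) (inv\<psi> v)" using covers_iff[of "inv\<psi> u" "inv\<psi> v"] uv inv_in_carrier apply_inv by simp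
  then show "r (inv\<psi> v) = Suc (r (inv\<psi> u))" using g by blast
qed

end

locale geometric_isomorphism = lattice_isomorphism + geometric L1
begin

lemma target_graded: "B.graded (\<lambda>u. rk L1 (inv\<psi> u))" using graded_transfer[OF rk_graded] .
lemma target_ranked: "ranked L2" using B.graded_rk(1)[OF target_graded] .
lemma map_rk: "x \<in> fst L1 \<Longrightarrow> rk L2 (\<psi> x) = rk L1 x"
  using B.graded_rk(2)[OF target_graded, of "\<psi> x"] in_carrier inv_apply by simp

lemma map_atoms: "atoms L2 = \<psi> ` atoms L1"
  unfolding atoms_def using map_rk carrier_image by auto

lemma map_joinL: "set J \<subseteq> fst L1 \<Longrightarrow> joinL L2 (map \<psi> J) = \<psi> (joinL L1 J)"
proof (induction J)
  case Nil then show ?case by (simp add: joinL_def map_bot)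
next
  case (Cons a J)
  then show ?case using map_join[of a "joinL L1 J"] joinL_closed by (simp add: joinL_def)
qed

lemma target_geometric: "geometric_lattice L2"
proof -
  have "atomic L2" unfolding atomic_def
  proof
    fix u assume "u \<in> fst L2"
    then obtain x where x: "x \<in> fst L1" "u = \<psi> x" using carrier_image by auto
    then obtain J where J: "set J \<subseteq> atoms L1" "x = joinL L1 J" using atomic unfolding atomic_def by blast
    have "set J \<subseteq> fst L1" using J unfolding atoms_def by auto
    then have "u = joinL L2 (map \<psi> J)" using map_joinL x J by simp
    moreover have "set (map \<psi> J) \<subseteq> atoms L2" using J map_atoms by auto
    ultimately show "\<exists>J. set J \<subseteq> atoms L2 \<and> u = joinL L2 J" by blast
  qed
  moreover have "semimodular L2" unfolding semimodular_def
  proof (intro ballI)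
    fix u v assume "u \<in> fst L2" "v \<in> fst L2"
    then obtain x y where "x \<in> fst L1" "y \<in> fst L1" "u = \<psi> x" "v = \<psi> y" using carrier_image by auto
    then show "rk L2 (lmeet L2 u v) + rk L2 (ljoin L2 u v) \<le> rk L2 u + rk L2 v"
      using rk_semimodular map_join[symmetric] map_meet[symmetric] map_rk by simp
  qed
  ultimately show ?thesis using target_ranked target_finite_lattice unfolding finite_lattice_def geometric_lattice_def by blast
qed

lemma map_modular_flat: "modular_flat L1 F \<Longrightarrow> modular_flat L2 (\<psi> F)"
  unfolding modular_flat_def
proof (intro conjI ballI)
  assume m: "F \<in> fst L1 \<and> (\<forall>F'\<in>fst L1. rk L1 (lmeet L1 F F') + rk L1 (ljoin L1 F F') = rk L1 F + rk L1 F')"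
  then show "\<psi> F \<in> fst L2" using in_carrier by blast
  fix u assume "u \<in> fst L2"
  then obtain x where "x \<in> fst L1" "u = \<psi> x" using carrier_image by auto
  then show "rk L2 (lmeet L2 (\<psi> F) u) + rk L2 (ljoin L2 (\<psi> F) u) = rk L2 (\<psi> F) + rk L2 u"
    using m map_join[symmetric] map_meet[symmetric] map_rk by simp
qed

end

lemma lattice_isomorphismI: "is_finite_lattice L1 \<Longrightarrow> lattice_iso L1 L2 \<psi> \<Longrightarrow> lattice_isomorphism L1 L2 \<psi>"
  unfolding lattice_isomorphism_def lattice_isomorphism_axioms_def finite_lattice_def by blast
lemma geometric_isomorphismI: "geometric_lattice L1 \<Longrightarrow> lattice_iso L1 L2 \<psi> \<Longrightarrow> geometric_isomorphism L1 L2 \<psi>"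
  unfolding geometric_isomorphism_def using lattice_isomorphismI geometricI geometric_lattice_def by blast

lemma lattice_embedding_comp:
  assumes f: "lattice_embedding A B f" and g: "lattice_embedding B C g"
  shows "lattice_embedding A C (g \<circ> f)"
proof -
  have f_inj: "inj_on f (fst A)" and f_into: "f ` fst A \<subseteq> fst B" and f_at: "f ` atoms A \<subseteq> atoms B"
    and f_le: "\<forall>x\<in>fst A. \<forall>y\<in>fst A. snd A x y \<longrightarrow> snd B (f x) (f y)"
    and f_join: "\<forall>x\<in>fst A. \<forall>y\<in>fst A. f (ljoin A x y) = ljoin B (f x) (f y)"
    using f unfolding lattice_embedding_def by blast+
  have g_inj: "inj_on g (fst B)" and g_into: "g ` fst B \<subseteq> fst C" and g_at: "g ` atoms B \<subseteq> atoms C"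
    and g_le: "\<forall>x\<in>fst B. \<forall>y\<in>fst B. snd B x y \<longrightarrow> snd C (g x) (g y)"
    and g_join: "\<forall>x\<in>fst B. \<forall>y\<in>fst B. g (ljoin B x y) = ljoin C (g x) (g y)"
    using g unfolding lattice_embedding_def by blast+
  show ?thesis unfolding lattice_embedding_def
  proof (intro conjI ballI impI)
    show "inj_on (g \<circ> f) (fst A)" using comp_inj_on[OF f_inj inj_on_subset[OF g_inj f_into]] .
    show "(g \<circ> f) ` fst A \<subseteq> fst C" "(g \<circ> f) ` atoms A \<subseteq> atoms C"
      using f_into g_into f_at g_at by (fastforce simp: image_comp[symmetric])+
    fix x y assume "x \<in> fst A" "y \<in> fst A"
    moreover have "f x \<in> fst B" "f y \<in> fst B" using calculation f_into by auto
    ultimately show "snd A x y \<Longrightarrow> snd C ((g \<circ> f) x) ((g \<circ> f) y)"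
      and "(g \<circ> f) (ljoin A x y) = ljoin C ((g \<circ> f) x) ((g \<circ> f) y)"
      using f_le g_le f_join g_join by simp_all
  qed
qed

lemma lattice_iso_inverse:
  assumes "lattice_iso L1 L2 \<psi>"
  shows "lattice_iso L2 L1 (the_inv_into (fst L1) \<psi>)"
proof -
  have bij: "bij_betw \<psi> (fst L1) (fst L2)" and le: "\<forall>x\<in>fst L1. \<forall>y\<in>fst L1. snd L1 x y \<longleftrightarrow> snd L2 (\<psi> x) (\<psi> y)"
    using assms unfolding lattice_iso_def by auto
  have inv: "the_inv_into (fst L1) \<psi> u \<in> fst L1" "\<psi> (the_inv_into (fst L1) \<psi> u) = u" if "u \<in> fst L2" for u
    using that bij by (simp_all add: bij_betw_def the_inv_into_into f_the_inv_into_f)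
  show ?thesis unfolding lattice_iso_def
  proof (intro conjI ballI)
    show "bij_betw (the_inv_into (fst L1) \<psi>) (fst L2) (fst L1)" by (rule bij_betw_the_inv_into[OF bij])
    fix u v assume uv: "u \<in> fst L2" "v \<in> fst L2"
    have "snd L1 (the_inv_into (fst L1) \<psi> u) (the_inv_into (fst L1) \<psi> v) \<longleftrightarrow>
        snd L2 (\<psi> (the_inv_into (fst L1) \<psi> u)) (\<psi> (the_inv_into (fst L1) \<psi> v))"
      using le inv(1)[OF uv(1)] inv(1)[OF uv(2)] by simp
    then show "snd L2 u v \<longleftrightarrow> snd L1 (the_inv_into (fst L1) \<psi> u) (the_inv_into (fst L1) \<psi> v)"
      using inv(2)[OF uv(1)] inv(2)[OF uv(2)] by simp
  qed
qed

definition image_lattice :: "('b \<Rightarrow> 'c) \<Rightarrow> 'b lat \<Rightarrow> 'c lat" where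
  "image_lattice h P = (h ` fst P, \<lambda>u v. snd P (the_inv_into (fst P) h u) (the_inv_into (fst P) h v))"

lemma lattice_iso_image_lattice:
  assumes "inj_on h (fst P)"
  shows "lattice_iso P (image_lattice h P) h"
  unfolding lattice_iso_def image_lattice_def fst_conv snd_conv
proof (intro conjI ballI)
  show "bij_betw h (fst P) (h ` fst P)" using assms by (rule inj_on_imp_bij_betw)
  fix x y assume "x \<in> fst P" "y \<in> fst P"
  then show "snd P x y \<longleftrightarrow> snd P (the_inv_into (fst P) h (h x)) (the_inv_into (fst P) h (h y))"
    using the_inv_into_f_f[OF assms] by simp
qed

text \<open>The notion of modular extension for arbitrary carrier types; needed because the
  auxiliary product lattices live on pair types.\<close>
definition modular_embedding :: "'b lat \<Rightarrow> 'c lat \<Rightarrow> ('b \<Rightarrow> 'c) \<Rightarrow> bool" where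
  "modular_embedding L E \<iota> \<longleftrightarrow> geometric_lattice E \<and> lattice_embedding L E \<iota> \<and>
      (\<exists>F\<in>fst E. modular_flat E F \<and> \<iota> ` fst L = {x \<in> fst E. snd E (lbot E) x \<and> snd E x F})"

lemma modular_extension_iff_embedding: "modular_extension L E \<iota> \<longleftrightarrow> modular_embedding L E \<iota>"
  unfolding modular_extension_def modular_embedding_def ..

context geometric_isomorphism
begin

lemma embedding: "lattice_embedding L1 L2 \<psi>"
  unfolding lattice_embedding_def
proof (intro conjI ballI impI)
  show "inj_on \<psi> (fst L1)" "\<psi> ` fst L1 \<subseteq> fst L2" "\<psi> ` atoms L1 \<subseteq> atoms L2"
    using inj carrier_image map_atoms by simp_all
  fix x y assume "x \<in> fst L1" "y \<in> fst L1"
  then show "snd L1 x y \<Longrightarrow> snd L2 (\<psi> x) (\<psi> y)" "\<psi> (ljoin L1 x y) = ljoin L2 (\<psi> x) (\<psi> y)"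
    using le_iff map_join by simp_all
qed

lemma inverse: "geometric_isomorphism L2 L1 inv\<psi>"
  using geometric_isomorphismI[OF target_geometric lattice_iso_inverse[OF iso]] unfolding inv\<psi>_def .

lemma embedding_comp_inverse: "lattice_embedding L1 C g \<Longrightarrow> lattice_embedding L2 C (g \<circ> inv\<psi>)"
  using lattice_embedding_comp[OF geometric_isomorphism.embedding[OF inverse]] .

lemma modular_embedding_comp:
  assumes "modular_embedding L L1 \<iota>"
  shows "modular_embedding L L2 (\<psi> \<circ> \<iota>)"
proof -
  obtain F where F: "F \<in> fst L1" "modular_flat L1 F"
    and im: "\<iota> ` fst L = {x \<in> fst L1. snd L1 (lbot L1) x \<and> snd L1 x F}"
    using assms unfolding modular_embedding_def by blast
  have "\<psi> ` {x \<in> fst L1. snd L1 (lbot L1) x \<and> snd L1 x F} =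
      {y \<in> fst L2. snd L2 (lbot L2) y \<and> snd L2 y (\<psi> F)}"
  proof (intro set_eqI iffI)
    fix y assume "y \<in> \<psi> ` {x \<in> fst L1. snd L1 (lbot L1) x \<and> snd L1 x F}"
    then show "y \<in> {y \<in> fst L2. snd L2 (lbot L2) y \<and> snd L2 y (\<psi> F)}"
      using F(1) le_iff map_bot[symmetric] in_carrier by auto
  next
    fix y assume y: "y \<in> {y \<in> fst L2. snd L2 (lbot L2) y \<and> snd L2 y (\<psi> F)}"
    then obtain x where "x \<in> fst L1" "y = \<psi> x" using carrier_image by auto
    then show "y \<in> \<psi> ` {x \<in> fst L1. snd L1 (lbot L1) x \<and> snd L1 x F}"
      using y F(1) le_iff map_bot[symmetric] by auto
  qed
  then have "(\<psi> \<circ> \<iota>) ` fst L = {y \<in> fst L2. snd L2 (lbot L2) y \<and> snd L2 y (\<psi> F)}"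
    using im by (simp only: image_comp[symmetric])
  moreover have "lattice_embedding L L2 (\<psi> \<circ> \<iota>)"
    using lattice_embedding_comp[OF _ embedding] assms unfolding modular_embedding_def by blast
  ultimately show ?thesis
    unfolding modular_embedding_def using target_geometric map_modular_flat[OF F(2)] in_carrier[OF F(1)] by blast
qed

end

definition below :: "'b lat \<Rightarrow> 'b \<Rightarrow> 'b lat" where
  "below E F = ({x \<in> fst E. snd E x F}, snd E)"

locale lower_interval = geometric E for E :: "'b lat" + fixes F assumes F_closed: "F \<in> fst E"
begin

lemma below_carrier: "fst (below E F) = {x \<in> fst E. snd E x F}" by (simp add: below_def)
lemma below_le: "snd (below E F) = snd E" by (simp add: below_def)
lemma below_in_carrier: "x \<in> fst (below E F) \<Longrightarrow> x \<in> fst E" by (simp add: below_carrier)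

lemma below_finite_lattice: "finite_lattice (below E F)"
  unfolding finite_lattice_def below_def
proof (rule is_finite_latticeI[where j = "ljoin E" and m = "lmeet E"])
  show "finite {x \<in> fst E. snd E x F}" using finite_carrier by simp
  show "{x \<in> fst E. snd E x F} \<noteq> {}" using bot_closed bot_least[OF F_closed] by blast
  fix x y z assume "x \<in> {x \<in> fst E. snd E x F}" "y \<in> {x \<in> fst E. snd E x F}" "z \<in> {x \<in> fst E. snd E x F}"
  then show "snd E x x" and "snd E x y \<Longrightarrow> snd E y x \<Longrightarrow> x = y"
    and "snd E x y \<Longrightarrow> snd E y z \<Longrightarrow> snd E x z"
    and "ljoin E x y \<in> {x \<in> fst E. snd E x F}" and "lmeet E x y \<in> {x \<in> fst E. snd E x F}"
    and "snd E x (ljoin E x y) \<and> snd E y (ljoin E x y)" and "snd E (lmeet E x y) x \<and> snd E (lmeet E x y) y"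
    and "snd E x z \<Longrightarrow> snd E y z \<Longrightarrow> snd E (ljoin E x y) z"
    and "snd E z x \<Longrightarrow> snd E z y \<Longrightarrow> snd E z (lmeet E x y)"
    using refl antisym[of x y] trans[of x y z] F_closed join_upper1 join_upper2 join_least[of x y]
      meet_lower1 meet_lower2 meet_greatest[of x y z] trans[OF _ _ F_closed meet_lower1] by simp_all
qed

sublocale D: finite_lattice "below E F" by (rule below_finite_lattice)

lemma below_join: "x \<in> fst (below E F) \<Longrightarrow> y \<in> fst (below E F) \<Longrightarrow> ljoin (below E F) x y = ljoin E x y"
  using D.join_unique[of x y "ljoin E x y"] join_upper1 join_upper2 join_least join_closed F_closed
  by (auto simp: below_carrier below_le)

lemma below_meet: "x \<in> fst (below E F) \<Longrightarrow> y \<in> fst (below E F) \<Longrightarrow> lmeet (below E F) x y = lmeet E x y"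
proof -
  assume xy: "x \<in> fst (below E F)" "y \<in> fst (below E F)"
  then have m: "lmeet E x y \<in> fst (below E F)" using meet_lower1 trans[OF _ _ F_closed] by (auto simp: below_carrier)
  show ?thesis using D.meet_unique[OF xy m] xy meet_lower1 meet_lower2 meet_greatest
    by (auto simp: below_carrier below_le)
qed

lemma below_bot: "lbot (below E F) = lbot E"
  using D.bot_unique[of "lbot E"] bot_least F_closed by (auto simp: below_carrier below_le)
lemma below_top: "ltop (below E F) = F"
  using D.top_unique[of F] refl F_closed by (auto simp: below_carrier below_le)

lemma below_llt: "llt (below E F) = llt E" unfolding llt_def below_le by simp

lemma below_covers: "x \<in> fst (below E F) \<Longrightarrow> y \<in> fst (below E F) \<Longrightarrow> covers (below E F) x y \<longleftrightarrow> covers E x y"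
  unfolding covers_def below_llt
proof safe
  fix z assume xy: "x \<in> fst (below E F)" "y \<in> fst (below E F)" and z: "z \<in> fst E" "llt E x z" "llt E z y"
    and n: "\<not> (\<exists>z\<in>fst (below E F). llt E x z \<and> llt E z y)"
  have "snd E z F" using z xy trans[OF z(1) _ F_closed] unfolding llt_def by (auto simp: below_carrier)
  then show False using n z by (auto simp: below_carrier)
qed (auto simp: below_carrier)

lemma below_graded: "D.graded (rk E)"
  unfolding D.graded_def
proof (intro conjI allI impI)
  show "rk E (lbot (below E F)) = 0" using below_bot by simp
  fix x y assume c: "covers (below E F) x y"
  then have "x \<in> fst (below E F)" "y \<in> fst (below E F)" unfolding covers_def by auto
  then have "covers E x y" using below_covers c by simp
  then show "rk E y = Suc (rk E x)" by (rule rk_cover)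
qed

lemma below_rk: "x \<in> fst (below E F) \<Longrightarrow> rk (below E F) x = rk E x" using D.graded_rk(2)[OF below_graded] .

lemma below_atoms: "atoms (below E F) = atoms E \<inter> fst (below E F)"
proof -
  have "atoms (below E F) = {a \<in> fst (below E F). rk E a = 1}" unfolding atoms_def using below_rk by auto
  then show ?thesis unfolding atoms_def using below_in_carrier by auto
qed

lemma below_joinL: "set J \<subseteq> fst (below E F) \<Longrightarrow> joinL (below E F) J = joinL E J"
proof (induction J)
  case Nil then show ?case by (simp add: joinL_def below_bot)
next
  case (Cons a J)
  then show ?case using below_join[of a "joinL E J"] D.joinL_closed[of J] by (simp add: joinL_def)
qed

lemma below_geometric: "geometric_lattice (below E F)"
proof -
  have "atomic (below E F)" unfolding atomic_def
  proof
    fix x assume x: "x \<in> fst (below E F)"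
    then obtain J where J: "set J \<subseteq> atoms E" "x = joinL E J" using atomic below_in_carrier unfolding atomic_def by blast
    have "set J \<subseteq> fst (below E F)"
    proof
      fix a assume "a \<in> set J"
      then have "a \<in> fst E" "snd E a x" using J joinL_upper[of J a] unfolding atoms_def by auto
      then show "a \<in> fst (below E F)" using x trans[OF _ _ F_closed] by (auto simp: below_carrier)
    qed
    then show "\<exists>J. set J \<subseteq> atoms (below E F) \<and> x = joinL (below E F) J"
      using J below_joinL below_atoms by auto
  qed
  moreover have "semimodular (below E F)" unfolding semimodular_def
    using rk_semimodular below_rk below_join below_meet below_in_carrier D.join_closed D.meet_closed by simp
  moreover have "ranked (below E F)" using D.graded_rk(1)[OF below_graded] .
  ultimately show ?thesis using below_finite_lattice unfolding finite_lattice_def geometric_lattice_def by blast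
qed

end

lemma lower_intervalI: "geometric_lattice E \<Longrightarrow> F \<in> fst E \<Longrightarrow> lower_interval E F"
  unfolding lower_interval_def lower_interval_axioms_def using geometricI by blast

locale geometric_product = A: geometric E1 + B: geometric E2 for E1 :: "'b lat" and E2 :: "'c lat"
begin

abbreviation "P \<equiv> prod_lattice E1 E2"

lemma prod_carrier: "fst P = fst E1 \<times> fst E2" by (simp add: prod_lattice_def)
lemma prod_le: "snd P (a, b) (c, d) \<longleftrightarrow> snd E1 a c \<and> snd E2 b d" by (simp add: prod_lattice_def)

lemma prod_lattice_fst_snd:
  "P = (fst E1 \<times> fst E2, \<lambda>u v. snd E1 (fst u) (fst v) \<and> snd E2 (snd u) (snd v))"
  by (simp add: prod_lattice_def case_prod_beta')

lemma prod_finite_lattice: "finite_lattice P"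
  unfolding finite_lattice_def prod_lattice_fst_snd
proof (rule is_finite_latticeI[where j = "\<lambda>u v. (ljoin E1 (fst u) (fst v), ljoin E2 (snd u) (snd v))"
      and m = "\<lambda>u v. (lmeet E1 (fst u) (fst v), lmeet E2 (snd u) (snd v))"])
  show "finite (fst E1 \<times> fst E2)" "fst E1 \<times> fst E2 \<noteq> {}"
    using A.finite_carrier B.finite_carrier A.carrier_nonempty B.carrier_nonempty by auto
  fix u v w assume "u \<in> fst E1 \<times> fst E2" "v \<in> fst E1 \<times> fst E2" "w \<in> fst E1 \<times> fst E2"
  with A.antisym[of "fst u" "fst v"] B.antisym[of "snd u" "snd v"] A.trans[of "fst u" "fst v" "fst w"]
    B.trans[of "snd u" "snd v" "snd w"] A.join_least B.join_least A.meet_greatest B.meet_greatest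
  show "snd E1 (fst u) (fst u) \<and> snd E2 (snd u) (snd u)" and
    "snd E1 (fst u) (fst v) \<and> snd E2 (snd u) (snd v) \<Longrightarrow> snd E1 (fst v) (fst u) \<and> snd E2 (snd v) (snd u) \<Longrightarrow> u = v"
    and "snd E1 (fst u) (fst v) \<and> snd E2 (snd u) (snd v) \<Longrightarrow> snd E1 (fst v) (fst w) \<and> snd E2 (snd v) (snd w) \<Longrightarrow>
      snd E1 (fst u) (fst w) \<and> snd E2 (snd u) (snd w)"
    by (auto simp: prod_eq_iff A.refl B.refl)
qed (auto simp: A.join_upper1 A.join_upper2 A.join_least B.join_upper1 B.join_upper2 B.join_least
      A.meet_lower1 A.meet_lower2 A.meet_greatest B.meet_lower1 B.meet_lower2 B.meet_greatest)

sublocale C: finite_lattice P by (rule prod_finite_lattice)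

lemma prod_join: assumes m: "a \<in> fst E1" "c \<in> fst E1" "b \<in> fst E2" "d \<in> fst E2"
  shows "ljoin P (a, b) (c, d) = (ljoin E1 a c, ljoin E2 b d)"
proof (rule C.join_unique)
  show "(a, b) \<in> fst P" "(c, d) \<in> fst P" "(ljoin E1 a c, ljoin E2 b d) \<in> fst P" using m by (simp_all add: prod_carrier)
  show "snd P (a, b) (ljoin E1 a c, ljoin E2 b d)" using m A.join_upper1 B.join_upper1 by (simp add: prod_le)
  show "snd P (c, d) (ljoin E1 a c, ljoin E2 b d)" using m A.join_upper2 B.join_upper2 by (simp add: prod_le)
  fix w assume w: "w \<in> fst P" "snd P (a, b) w" "snd P (c, d) w"
  obtain e f where "w = (e, f)" by (cases w)
  then show "snd P (ljoin E1 a c, ljoin E2 b d) w" using w m A.join_least B.join_least by (simp add: prod_le prod_carrier)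
qed

lemma prod_meet: assumes m: "a \<in> fst E1" "c \<in> fst E1" "b \<in> fst E2" "d \<in> fst E2"
  shows "lmeet P (a, b) (c, d) = (lmeet E1 a c, lmeet E2 b d)"
proof (rule C.meet_unique)
  show "(a, b) \<in> fst P" "(c, d) \<in> fst P" "(lmeet E1 a c, lmeet E2 b d) \<in> fst P" using m by (simp_all add: prod_carrier)
  show "snd P (lmeet E1 a c, lmeet E2 b d) (a, b)" using m A.meet_lower1 B.meet_lower1 by (simp add: prod_le)
  show "snd P (lmeet E1 a c, lmeet E2 b d) (c, d)" using m A.meet_lower2 B.meet_lower2 by (simp add: prod_le)
  fix w assume w: "w \<in> fst P" "snd P w (a, b)" "snd P w (c, d)"
  obtain e f where "w = (e, f)" by (cases w)
  then show "snd P w (lmeet E1 a c, lmeet E2 b d)" using w m A.meet_greatest B.meet_greatest by (simp add: prod_le prod_carrier)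
qed

lemma prod_bot: "lbot P = (lbot E1, lbot E2)"
proof (rule C.bot_unique)
  show "(lbot E1, lbot E2) \<in> fst P" by (simp add: prod_carrier)
  show "\<forall>x\<in>fst P. snd P (lbot E1, lbot E2) x"
  proof
    fix x assume "x \<in> fst P"
    then obtain e f where "x = (e, f)" "e \<in> fst E1" "f \<in> fst E2" by (cases x) (simp add: prod_carrier)
    then show "snd P (lbot E1, lbot E2) x" using A.bot_least B.bot_least by (simp add: prod_le)
  qed
qed
lemma prod_top: "ltop P = (ltop E1, ltop E2)"
proof (rule C.top_unique)
  show "(ltop E1, ltop E2) \<in> fst P" by (simp add: prod_carrier)
  show "\<forall>x\<in>fst P. snd P x (ltop E1, ltop E2)"
  proof
    fix x assume "x \<in> fst P"
    then obtain e f where "x = (e, f)" "e \<in> fst E1" "f \<in> fst E2" by (cases x) (simp add: prod_carrier)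
    then show "snd P x (ltop E1, ltop E2)" using A.top_greatest B.top_greatest by (simp add: prod_le)
  qed
qed

lemma prod_covers:
  assumes "covers P (a, b) (c, d)"
  shows "(a = c \<and> covers E2 b d) \<or> (covers E1 a c \<and> b = d)"
proof -
  have m: "a \<in> fst E1" "c \<in> fst E1" "b \<in> fst E2" "d \<in> fst E2"
    and le: "snd E1 a c" "snd E2 b d" "(a, b) \<noteq> (c, d)"
    and all: "\<forall>z\<in>fst P. snd P (a, b) z \<and> snd P z (c, d) \<longrightarrow> z = (a, b) \<or> z = (c, d)"
    using assms unfolding C.covers_iff by (auto simp: prod_carrier prod_le)
  have between: "(x = a \<and> y = b) \<or> (x = c \<and> y = d)"
    if "x \<in> fst E1" "y \<in> fst E2" "snd E1 a x" "snd E2 b y" "snd E1 x c" "snd E2 y d" for x y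
    using all[rule_format, of "(x, y)"] that by (simp add: prod_carrier prod_le)
  show ?thesis
  proof (cases "a = c")
    case True
    then have "covers E2 b d" unfolding B.covers_iff
      using m le between[of a] A.refl by auto
    then show ?thesis using True by simp
  next
    case False
    then have "b = d" using between[of c b] m le A.refl B.refl by auto
    then have "covers E1 a c" unfolding A.covers_iff
      using m le between[of _ b] B.refl by auto
    then show ?thesis using \<open>b = d\<close> by simp
  qed
qed

lemma prod_graded: "C.graded (\<lambda>(a, b). rk E1 a + rk E2 b)"
  unfolding C.graded_def
proof (intro conjI allI impI)
  show "(case lbot P of (a, b) \<Rightarrow> rk E1 a + rk E2 b) = 0" by (simp add: prod_bot)
  fix u v assume c: "covers P u v"
  obtain a b c d where uv: "u = (a, b)" "v = (c, d)" by (cases u; cases v) auto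
  then have "covers P (a, b) (c, d)" using c by simp
  then consider "a = c" "covers E2 b d" | "covers E1 a c" "b = d" using prod_covers by blast
  then show "(case v of (a, b) \<Rightarrow> rk E1 a + rk E2 b) = Suc (case u of (a, b) \<Rightarrow> rk E1 a + rk E2 b)"
  proof cases
    case 1 then show ?thesis using uv B.rk_cover[OF 1(2)] by simp
  next
    case 2 then show ?thesis using uv A.rk_cover[OF 2(1)] by simp
  qed
qed

lemma prod_rk: "a \<in> fst E1 \<Longrightarrow> b \<in> fst E2 \<Longrightarrow> rk P (a, b) = rk E1 a + rk E2 b"
  using C.graded_rk(2)[OF prod_graded, of "(a, b)"] by (simp add: prod_carrier)

lemma atom_left: assumes "a \<in> atoms E1" shows "(a, lbot E2) \<in> atoms P"
proof -
  have "a \<in> fst E1" "rk E1 a = 1" using assms unfolding atoms_def by auto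
  then show ?thesis unfolding atoms_def using prod_rk[of a "lbot E2"] by (simp add: prod_carrier)
qed
lemma atom_right: assumes "b \<in> atoms E2" shows "(lbot E1, b) \<in> atoms P"
proof -
  have "b \<in> fst E2" "rk E2 b = 1" using assms unfolding atoms_def by auto
  then show ?thesis unfolding atoms_def using prod_rk[of "lbot E1" b] by (simp add: prod_carrier)
qed
lemma prod_atoms_cases: assumes "(a, b) \<in> atoms P"
  shows "(a \<in> atoms E1 \<and> b = lbot E2) \<or> (a = lbot E1 \<and> b \<in> atoms E2)"
proof -
  have m: "a \<in> fst E1" "b \<in> fst E2" and r: "rk E1 a + rk E2 b = 1"
    using assms prod_rk unfolding atoms_def by (auto simp: prod_carrier)
  then consider "rk E1 a = 1" "rk E2 b = 0" | "rk E1 a = 0" "rk E2 b = 1" by linarith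
  then show ?thesis
  proof cases
    case 1 then show ?thesis using m B.rk_zero[of b] unfolding atoms_def by simp
  next
    case 2 then show ?thesis using m A.rk_zero[of a] unfolding atoms_def by simp
  qed
qed

lemma prod_joinL: "set K \<subseteq> fst P \<Longrightarrow> joinL P K = (joinL E1 (map fst K), joinL E2 (map snd K))"
proof (induction K)
  case Nil then show ?case by (simp add: joinL_def prod_bot)
next
  case (Cons k K)
  obtain a b where k: "k = (a, b)" by (cases k)
  have "set (map fst K) \<subseteq> fst E1" "set (map snd K) \<subseteq> fst E2" using Cons.prems by (auto simp: prod_carrier)
  then have "joinL E1 (map fst K) \<in> fst E1" "joinL E2 (map snd K) \<in> fst E2" using A.joinL_closed B.joinL_closed by auto
  moreover have "a \<in> fst E1" "b \<in> fst E2" using Cons.prems k by (auto simp: prod_carrier)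
  moreover have IH: "joinL P K = (joinL E1 (map fst K), joinL E2 (map snd K))" using Cons by simp
  moreover have "joinL P (k # K) = ljoin P k (joinL P K)" by (simp add: joinL_def)
  moreover have "joinL E1 (map fst (k # K)) = ljoin E1 a (joinL E1 (map fst K))" using k by (simp add: joinL_def)
  moreover have "joinL E2 (map snd (k # K)) = ljoin E2 b (joinL E2 (map snd K))" using k by (simp add: joinL_def)
  ultimately show ?case using prod_join[of a "joinL E1 (map fst K)" b "joinL E2 (map snd K)"] k by simp
qed

lemma prod_geometric: "geometric_lattice P"
proof -
  have "atomic P" unfolding atomic_def
  proof
    fix u assume "u \<in> fst P"
    then obtain x y where u: "u = (x, y)" "x \<in> fst E1" "y \<in> fst E2" by (auto simp: prod_carrier)
    obtain J1 where J1: "set J1 \<subseteq> atoms E1" "x = joinL E1 J1" using A.atomic u unfolding atomic_def by blast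
    obtain J2 where J2: "set J2 \<subseteq> atoms E2" "y = joinL E2 J2" using B.atomic u unfolding atomic_def by blast
    have s1: "set J1 \<subseteq> fst E1" "set J2 \<subseteq> fst E2" using J1 J2 unfolding atoms_def by auto
    let ?K = "map (\<lambda>a. (a, lbot E2)) J1 @ map (\<lambda>b. (lbot E1, b)) J2"
    have K: "set ?K \<subseteq> atoms P" using J1 J2 atom_left atom_right by auto
    have KC: "set ?K \<subseteq> fst P" using s1 by (auto simp: prod_carrier)
    have e1: "map fst ?K = J1 @ map (\<lambda>_. lbot E1) J2" by (simp add: comp_def)
    have e2: "map snd ?K = map (\<lambda>_. lbot E2) J1 @ J2" by (simp add: comp_def)
    have "joinL P ?K = (joinL E1 (map fst ?K), joinL E2 (map snd ?K))" using prod_joinL[OF KC] .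
    also have "\<dots> = (x, y)" unfolding e1 e2
      by (simp only: A.joinL_append_bots[OF s1(1)] B.joinL_bots_append[OF s1(2)] J1(2) J2(2))
    finally have "joinL P ?K = (x, y)" .
    then show "\<exists>J. set J \<subseteq> atoms P \<and> u = joinL P J" using K u by metis
  qed
  moreover have "semimodular P" unfolding semimodular_def
  proof (intro ballI)
    fix u v assume "u \<in> fst P" "v \<in> fst P"
    then obtain a b c d where uv: "u = (a, b)" "v = (c, d)" "a \<in> fst E1" "c \<in> fst E1" "b \<in> fst E2" "d \<in> fst E2"
      by (auto simp: prod_carrier)
    have "rk E1 (lmeet E1 a c) + rk E1 (ljoin E1 a c) \<le> rk E1 a + rk E1 c" using A.rk_semimodular uv by simp
    moreover have "rk E2 (lmeet E2 b d) + rk E2 (ljoin E2 b d) \<le> rk E2 b + rk E2 d" using B.rk_semimodular uv by simp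
    ultimately show "rk P (lmeet P u v) + rk P (ljoin P u v) \<le> rk P u + rk P v"
      using uv prod_join prod_meet prod_rk by simp
  qed
  moreover have "ranked P" using C.graded_rk(1)[OF prod_graded] .
  ultimately show ?thesis using prod_finite_lattice unfolding finite_lattice_def geometric_lattice_def by blast
qed

lemma prod_modular_top_bot: "modular_flat P (ltop E1, lbot E2)"
  unfolding modular_flat_def
proof (intro conjI ballI)
  show "(ltop E1, lbot E2) \<in> fst P" by (simp add: prod_carrier)
  fix u assume "u \<in> fst P"
  then obtain a b where u: "u = (a, b)" "a \<in> fst E1" "b \<in> fst E2" by (auto simp: prod_carrier)
  show "rk P (lmeet P (ltop E1, lbot E2) u) + rk P (ljoin P (ltop E1, lbot E2) u) =
      rk P (ltop E1, lbot E2) + rk P u"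
  proof -
    have "lmeet P (ltop E1, lbot E2) u = (a, lbot E2)"
      using prod_meet[of "ltop E1" a "lbot E2" b] u A.meet_top_left[of a] B.meet_bot_left[of b] by simp
    moreover have "ljoin P (ltop E1, lbot E2) u = (ltop E1, b)"
      using prod_join[of "ltop E1" a "lbot E2" b] u A.join_top_left[of a] B.join_bot_left[of b] by simp
    ultimately show ?thesis using u prod_rk[of a "lbot E2"] prod_rk[of "ltop E1" b] prod_rk[of "ltop E1" "lbot E2"] prod_rk[of a b]
      by simp
  qed
qed

lemma first_factor_embedding: "lattice_embedding E1 P (\<lambda>x. (x, lbot E2))"
  unfolding lattice_embedding_def
proof (intro conjI ballI impI)
  show "inj_on (\<lambda>x. (x, lbot E2)) (fst E1)" by (simp add: inj_on_def)
  show "(\<lambda>x. (x, lbot E2)) ` fst E1 \<subseteq> fst P" by (auto simp: prod_carrier)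
  show "(\<lambda>x. (x, lbot E2)) ` atoms E1 \<subseteq> atoms P" using atom_left by auto
  fix x y assume "x \<in> fst E1" "y \<in> fst E1"
  then show "snd E1 x y \<Longrightarrow> snd P (x, lbot E2) (y, lbot E2)"
    and "(ljoin E1 x y, lbot E2) = ljoin P (x, lbot E2) (y, lbot E2)"
    using prod_le B.refl prod_join B.join_bot_left by simp_all
qed

lemma modular_embedding_first_factor:
  assumes "geometric_lattice L" "lattice_iso L E1 \<iota>"
  shows "modular_embedding L P (\<lambda>a. (\<iota> a, lbot E2))"
proof -
  interpret I: geometric_isomorphism L E1 \<iota> using geometric_isomorphismI assms .
  have "(\<lambda>x. (x, lbot E2)) ` fst E1 = {p \<in> fst P. snd P (lbot P) p \<and> snd P p (ltop E1, lbot E2)}"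
    using A.bot_least A.top_greatest B.bot_least B.refl B.antisym
    by (auto simp: prod_carrier prod_le prod_bot)
  then have "(\<lambda>a. (\<iota> a, lbot E2)) ` fst L = {p \<in> fst P. snd P (lbot P) p \<and> snd P p (ltop E1, lbot E2)}"
    using I.carrier_image by (simp add: image_image)
  moreover have "lattice_embedding L P (\<lambda>a. (\<iota> a, lbot E2))"
    using lattice_embedding_comp[OF I.embedding first_factor_embedding] by (simp add: comp_def)
  moreover have "(ltop E1, lbot E2) \<in> fst P" by (simp add: prod_carrier)
  ultimately show ?thesis
    unfolding modular_embedding_def using prod_geometric prod_modular_top_bot by blast
qed

end

lemma geometric_productI: "geometric_lattice E1 \<Longrightarrow> geometric_lattice E2 \<Longrightarrow> geometric_product E1 E2"
  unfolding geometric_product_def by (intro conjI geometricI)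

context geometric begin

text \<open>Semimodularity gives \<le>; conversely F \<or> (x \<or> y) = F \<or> y has rank rk F + rk y by modularity
  of F, while x \<le> F \<and> (x \<or> y).\<close>
lemma rk_join_disjoint_modular:
  assumes F_closed: "F \<in> fst L" and G_closed: "G \<in> fst L" and mF: "modular_flat L F"
    and FG: "lmeet L G F = lbot L"
    and x: "x \<in> fst L" "snd L x F" and y: "y \<in> fst L" "snd L y G"
  shows "rk L (ljoin L x y) = rk L x + rk L y"
proof -
  have "rk L (lmeet L x y) + rk L (ljoin L x y) \<le> rk L x + rk L y" using rk_semimodular x(1) y(1) by simp
  then have le1: "rk L (ljoin L x y) \<le> rk L x + rk L y" by simp
  have Fy: "lmeet L F y = lbot L"
  proof -
    have "snd L (lmeet L F y) G" using trans[OF meet_closed[OF F_closed y(1)] y(1) G_closed meet_lower2[OF F_closed y(1)] y(2)] .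
    moreover have "snd L (lmeet L F y) F" using meet_lower1[OF F_closed y(1)] .
    ultimately have "snd L (lmeet L F y) (lmeet L G F)" using meet_greatest[OF G_closed F_closed] F_closed y(1) by simp
    then have "snd L (lmeet L F y) (lbot L)" using FG by simp
    then show ?thesis using antisym[OF meet_closed[OF F_closed y(1)] bot_closed] bot_least[OF meet_closed[OF F_closed y(1)]] by simp
  qed
  have "rk L (lmeet L F y) + rk L (ljoin L F y) = rk L F + rk L y" using mF y(1) unfolding modular_flat_def by blast
  then have rFy: "rk L (ljoin L F y) = rk L F + rk L y" using Fy by simp
  have xy: "ljoin L x y \<in> fst L" using x y by simp
  have eq: "ljoin L F (ljoin L x y) = ljoin L F y"
  proof (rule antisym)
    show "ljoin L F (ljoin L x y) \<in> fst L" "ljoin L F y \<in> fst L" using F_closed xy y by auto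
    have "snd L x (ljoin L F y)" using trans[OF x(1) F_closed _ x(2) join_upper1[OF F_closed y(1)]] F_closed y by simp
    then have "snd L (ljoin L x y) (ljoin L F y)" using join_least[OF x(1) y(1)] join_upper2[OF F_closed y(1)] F_closed y by simp
    then show "snd L (ljoin L F (ljoin L x y)) (ljoin L F y)"
      using join_least[OF F_closed xy] join_upper1[OF F_closed y(1)] F_closed y by simp
    show "snd L (ljoin L F y) (ljoin L F (ljoin L x y))"
      using join_mono[OF F_closed y(1) F_closed xy refl[OF F_closed] join_upper2[OF x(1) y(1)]] .
  qed
  have "rk L (lmeet L F (ljoin L x y)) + rk L (ljoin L F (ljoin L x y)) \<le> rk L F + rk L (ljoin L x y)"
    using rk_semimodular F_closed xy by simp
  moreover have "rk L x \<le> rk L (lmeet L F (ljoin L x y))"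
    using rk_mono[OF x(1) meet_closed[OF F_closed xy] meet_greatest[OF F_closed xy x(1) x(2) join_upper1[OF x(1) y(1)]]] .
  ultimately have "rk L x + rk L y \<le> rk L (ljoin L x y)" using eq rFy by simp
  then show ?thesis using le1 by simp
qed

text \<open>If x \<or> y = x' \<or> y', this is also (x \<or> x') \<or> (y \<or> y'), and rank additivity forces
  x = x \<or> x' = x' and y = y \<or> y' = y'.\<close>
lemma join_inj_disjoint_modular:
  assumes F_closed: "F \<in> fst L" and G_closed: "G \<in> fst L" and mF: "modular_flat L F"
    and FG: "lmeet L G F = lbot L"
    and x: "x \<in> fst L" "snd L x F" and y: "y \<in> fst L" "snd L y G"
    and x': "x' \<in> fst L" "snd L x' F" and y': "y' \<in> fst L" "snd L y' G"
    and eq: "ljoin L x y = ljoin L x' y'"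
  shows "x = x' \<and> y = y'"
proof -
  let ?X = "ljoin L x x'" and ?Y = "ljoin L y y'" and ?Z = "ljoin L x y"
  have XC: "?X \<in> fst L" and YC: "?Y \<in> fst L" and ZC: "?Z \<in> fst L" using x x' y y' by auto
  have XF: "snd L ?X F" using join_least[OF x(1) x'(1) F_closed x(2) x'(2)] .
  have YG: "snd L ?Y G" using join_least[OF y(1) y'(1) G_closed y(2) y'(2)] .
  have "ljoin L ?X ?Y = ?Z"
  proof (rule antisym)
    show "ljoin L ?X ?Y \<in> fst L" using XC YC by simp
    show "?Z \<in> fst L" by (rule ZC)
    have a: "snd L x ?Z" "snd L y ?Z" using join_upper1 join_upper2 x y by auto
    have b: "snd L x' ?Z" "snd L y' ?Z" using join_upper1[OF x'(1) y'(1)] join_upper2[OF x'(1) y'(1)] eq by auto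
    have "snd L ?X ?Z" using join_least[OF x(1) x'(1) ZC a(1) b(1)] .
    moreover have "snd L ?Y ?Z" using join_least[OF y(1) y'(1) ZC a(2) b(2)] .
    ultimately show "snd L (ljoin L ?X ?Y) ?Z" using join_least[OF XC YC ZC] by simp
    show "snd L ?Z (ljoin L ?X ?Y)"
      using join_mono[OF x(1) y(1) XC YC join_upper1[OF x(1) x'(1)] join_upper1[OF y(1) y'(1)]] .
  qed
  then have r: "rk L ?Z = rk L ?X + rk L ?Y" using rk_join_disjoint_modular[OF F_closed G_closed mF FG XC XF YC YG] by simp
  have r1: "rk L ?Z = rk L x + rk L y" using rk_join_disjoint_modular[OF F_closed G_closed mF FG x y] .
  have r2: "rk L ?Z = rk L x' + rk L y'" using rk_join_disjoint_modular[OF F_closed G_closed mF FG x' y'] eq by simp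
  have m1: "rk L x \<le> rk L ?X" "rk L x' \<le> rk L ?X" using rk_mono XC x x' join_upper1 join_upper2 by auto
  have m2: "rk L y \<le> rk L ?Y" "rk L y' \<le> rk L ?Y" using rk_mono YC y y' join_upper1 join_upper2 by auto
  have "x = ?X" using rk_eq[OF x(1) XC join_upper1[OF x(1) x'(1)]] r r1 m1 m2 by linarith
  moreover have "x' = ?X" using rk_eq[OF x'(1) XC join_upper2[OF x(1) x'(1)]] r r2 m1 m2 by linarith
  moreover have "y = ?Y" using rk_eq[OF y(1) YC join_upper1[OF y(1) y'(1)]] r r1 m1 m2 by linarith
  moreover have "y' = ?Y" using rk_eq[OF y'(1) YC join_upper2[OF y(1) y'(1)]] r r2 m1 m2 by linarith
  ultimately show ?thesis by simp
qed

lemma join_embedding_disjoint_modular: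
  assumes F_closed: "F \<in> fst L" and G_closed: "G \<in> fst L" and mF: "modular_flat L F"
    and FG: "lmeet L G F = lbot L"
  shows "lattice_embedding (prod_lattice (below L F) (below L G)) L (\<lambda>p. ljoin L (fst p) (snd p))"
proof -
  interpret E1: lower_interval L F using lower_intervalI[OF geometric F_closed] .
  interpret E2: lower_interval L G using lower_intervalI[OF geometric G_closed] .
  interpret PP: geometric_product "below L F" "below L G"
    using geometric_productI[OF E1.below_geometric E2.below_geometric] .
  have inP: "p \<in> fst PP.P \<longleftrightarrow> fst p \<in> fst L \<and> snd L (fst p) F \<and> snd p \<in> fst L \<and> snd L (snd p) G" for p
    by (auto simp: prod_lattice_def below_def mem_Times_iff)
  show ?thesis unfolding lattice_embedding_def
  proof (intro conjI ballI impI)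
    show "inj_on (\<lambda>p. ljoin L (fst p) (snd p)) (fst PP.P)"
      using join_inj_disjoint_modular[OF F_closed G_closed mF FG] by (auto simp: inj_on_def inP prod_eq_iff)
    show "(\<lambda>p. ljoin L (fst p) (snd p)) ` fst PP.P \<subseteq> fst L" by (auto simp: inP)
    show "(\<lambda>p. ljoin L (fst p) (snd p)) ` atoms PP.P \<subseteq> atoms L"
    proof clarify
      fix x y assume a: "(x, y) \<in> atoms PP.P"
      then have "x \<in> fst L" "y \<in> fst L" using inP[of "(x, y)"] unfolding atoms_def by auto
      with PP.prod_atoms_cases[OF a] show "ljoin L (fst (x, y)) (snd (x, y)) \<in> atoms L"
        using E1.below_atoms E2.below_atoms E1.below_bot E2.below_bot join_bot_left join_bot_right by auto
    qed
    fix p q assume pq: "p \<in> fst PP.P" "q \<in> fst PP.P"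
    then show "snd PP.P p q \<Longrightarrow> snd L (ljoin L (fst p) (snd p)) (ljoin L (fst q) (snd q))"
      using join_mono by (auto simp: inP prod_lattice_def below_def)
    have "ljoin PP.P p q = (ljoin L (fst p) (fst q), ljoin L (snd p) (snd q))"
      using pq PP.prod_join E1.below_join E2.below_join by (auto simp: PP.prod_carrier)
    then show "ljoin L (fst (ljoin PP.P p q)) (snd (ljoin PP.P p q)) =
        ljoin L (ljoin L (fst p) (snd p)) (ljoin L (fst q) (snd q))"
      using pq join_interchange by (simp add: inP)
  qed
qed

lemma rk_top_prod_below_disjoint_modular:
  assumes F_closed: "F \<in> fst L" and G_closed: "G \<in> fst L" and mF: "modular_flat L F"
    and FG: "lmeet L G F = lbot L"
  shows "rk (prod_lattice (below L F) (below L G)) (ltop (prod_lattice (below L F) (below L G))) =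
    rk L (ljoin L F G)"
proof -
  interpret E1: lower_interval L F using lower_intervalI[OF geometric F_closed] .
  interpret E2: lower_interval L G using lower_intervalI[OF geometric G_closed] .
  interpret PP: geometric_product "below L F" "below L G"
    using geometric_productI[OF E1.below_geometric E2.below_geometric] .
  show ?thesis
    using PP.prod_top PP.prod_rk E1.below_top E2.below_top E1.below_rk E2.below_rk E1.D.top_closed E2.D.top_closed
      rk_join_disjoint_modular[OF F_closed G_closed mF FG F_closed refl[OF F_closed] G_closed refl[OF G_closed]] by simp
qed
end

lemma lattice_embedding_le_iff:
  assumes L: "is_finite_lattice L" and E: "is_finite_lattice E" and emb: "lattice_embedding L E \<iota>"
    and x: "x \<in> fst L" and y: "y \<in> fst L"
  shows "snd E (\<iota> x) (\<iota> y) \<longleftrightarrow> snd L x y"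
proof
  interpret L: finite_lattice L using L unfolding finite_lattice_def .
  interpret E: finite_lattice E using E unfolding finite_lattice_def .
  have inj: "inj_on \<iota> (fst L)" and im: "\<iota> ` fst L \<subseteq> fst E"
    and jn: "\<iota> (ljoin L x y) = ljoin E (\<iota> x) (\<iota> y)"
    using emb x y unfolding lattice_embedding_def by auto
  assume "snd E (\<iota> x) (\<iota> y)"
  then have "\<iota> (ljoin L x y) = \<iota> y" using E.join_eq_right im x y jn by auto
  then have "ljoin L x y = y" using inj x y L.join_closed unfolding inj_on_def by blast
  then show "snd L x y" using L.join_le_iff x y by simp
next
  assume "snd L x y"
  then show "snd E (\<iota> x) (\<iota> y)" using emb x y unfolding lattice_embedding_def by blast
qed

lemma modular_extensionD:
  assumes GLL: "geometric_lattice L" and me: "modular_extension L E \<iota>"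
  shows "geometric E" "lattice_embedding L E \<iota>" "Fiota L \<iota> \<in> fst E" "modular_flat E (Fiota L \<iota>)"
    "\<iota> ` fst L = fst (below E (Fiota L \<iota>))"
proof -
  interpret L: geometric L using geometricI[OF GLL] .
  show GE: "geometric E" using me unfolding modular_extension_def using geometricI by blast
  interpret E: geometric E by (rule GE)
  show emb: "lattice_embedding L E \<iota>" using me unfolding modular_extension_def by blast
  obtain F where F: "F \<in> fst E" "modular_flat E F" "\<iota> ` fst L = {x \<in> fst E. snd E (lbot E) x \<and> snd E x F}"
    using me unfolding modular_extension_def by blast
  have F': "\<iota> ` fst L = {x \<in> fst E. snd E x F}" using F(3) E.bot_least by auto
  then obtain a where a: "a \<in> fst L" "F = \<iota> a" using F(1) E.refl by auto
  have "\<iota> (ltop L) \<in> fst E" "snd E (\<iota> (ltop L)) F" using F' L.top_closed by auto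
  moreover have "snd E F (\<iota> (ltop L))"
    using emb a L.top_closed L.top_greatest[OF a(1)] unfolding lattice_embedding_def by blast
  ultimately have eq: "Fiota L \<iota> = F" unfolding Fiota_def using E.antisym F(1) by blast
  show "Fiota L \<iota> \<in> fst E" "modular_flat E (Fiota L \<iota>)" using eq F by auto
  show "\<iota> ` fst L = fst (below E (Fiota L \<iota>))" using F' eq by (simp add: below_def)
qed

lemma modular_extension_iso_below:
  assumes GLL: "geometric_lattice L" and me: "modular_extension L E \<iota>"
  shows "lattice_iso L (below E (Fiota L \<iota>)) \<iota>"
  unfolding lattice_iso_def
proof (intro conjI ballI)
  have "inj_on \<iota> (fst L)" using modular_extensionD(2)[OF assms] unfolding lattice_embedding_def by blast
  then show "bij_betw \<iota> (fst L) (fst (below E (Fiota L \<iota>)))"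
    using modular_extensionD(5)[OF assms] by (simp add: bij_betw_def)
  fix x y assume "x \<in> fst L" "y \<in> fst L"
  then show "snd L x y = snd (below E (Fiota L \<iota>)) (\<iota> x) (\<iota> y)"
    using lattice_embedding_le_iff[OF _ _ modular_extensionD(2)[OF assms]] modular_extensionD(1)[OF assms] GLL
    unfolding below_def geometric_lattice_def geometric_def finite_lattice_def by simp
qed

lemma modular_extension_rk:
  assumes GLL: "geometric_lattice L" and me: "modular_extension L E \<iota>" and x: "x \<in> fst L"
  shows "rk E (\<iota> x) = rk L x"
proof -
  interpret D: lower_interval E "Fiota L \<iota>"
    using modular_extensionD[OF GLL me] unfolding lower_interval_def lower_interval_axioms_def by blast
  interpret I: geometric_isomorphism L "below E (Fiota L \<iota>)" \<iota>
    using geometric_isomorphismI[OF GLL modular_extension_iso_below[OF GLL me]] .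
  show ?thesis using I.map_rk[OF x] D.below_rk I.in_carrier[OF x] by simp
qed

lemma modular_extension_bot:
  assumes GLL: "geometric_lattice L" and me: "modular_extension L E \<iota>"
  shows "\<iota> (lbot L) = lbot E"
proof -
  interpret D: lower_interval E "Fiota L \<iota>"
    using modular_extensionD[OF GLL me] unfolding lower_interval_def lower_interval_axioms_def by blast
  interpret I: geometric_isomorphism L "below E (Fiota L \<iota>)" \<iota>
    using geometric_isomorphismI[OF GLL modular_extension_iso_below[OF GLL me]] .
  show ?thesis using I.map_bot D.below_bot by simp
qed

lemma grading_zero_disjoint:
  assumes GLL: "geometric_lattice L" and me: "modular_extension L E \<iota>" and J: "set J \<subseteq> fst E"
    and gz: "grading_zero L (E, \<iota>, J)"
  shows "lmeet E (joinL E J) (Fiota L \<iota>) = lbot E"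
proof -
  interpret E: geometric E using modular_extensionD(1)[OF GLL me] .
  have "inj_on \<iota> (fst L)" using modular_extensionD(2)[OF GLL me] unfolding lattice_embedding_def by blast
  have F_closed: "Fiota L \<iota> \<in> fst E" using modular_extensionD(3)[OF GLL me] .
  have "lmeet E (joinL E J) (Fiota L \<iota>) \<in> fst (below E (Fiota L \<iota>))"
    using E.meet_closed[OF E.joinL_closed[OF J] F_closed] E.meet_lower2[OF E.joinL_closed[OF J] F_closed]
    by (simp add: below_def)
  then obtain a where a: "a \<in> fst L" "lmeet E (joinL E J) (Fiota L \<iota>) = \<iota> a"
    using modular_extensionD(5)[OF GLL me] by (metis imageE)
  then have "a = lbot L"
    using gz the_inv_into_f_f[OF \<open>inj_on \<iota> (fst L)\<close> a(1)] unfolding grading_zero_def by simp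
  then show ?thesis using a modular_extension_bot[OF GLL me] by simp
qed

interpretation fm: module "\<lambda>(c::rat) (f :: 'b \<Rightarrow> rat) X. c * f X"
  by unfold_locales (auto simp: fun_eq_iff algebra_simps)

lemma relspan_eq: "md_relspan L = fm.span (md_relations L)" unfolding md_relspan_def by simp

lemma zero_relation_in_relspan:
  assumes "zero_R3 L D \<or> zero_R4 L D \<or> zero_R5 L D"
  shows "md_basis D \<in> md_relspan L"
proof -
  have "md_basis D \<in> md_relations L" using assms unfolding md_relations_def by blast
  then show ?thesis unfolding relspan_eq by (rule fm.span_base)
qed

lemma rel_R2_in_relspan:
  assumes "rel_R2 L D D'"
  shows "md_basis D - md_basis D' \<in> md_relspan L"
proof -
  have "md_basis D - md_basis D' \<in> md_relations L" using assms unfolding md_relations_def by blast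
  then show ?thesis unfolding relspan_eq by (rule fm.span_base)
qed

text \<open>The diagram transported onto [0, F\<iota>] \<times> [0, \<Or>J], copied into the ambient type
  through the injection h.\<close>
locale disjoint_split =
  fixes L :: "'a lat" and E :: "('a + nat) lat" and \<iota> :: "'a \<Rightarrow> 'a + nat" and J :: "('a + nat) list"
    and h :: "('a + nat) \<times> ('a + nat) \<Rightarrow> 'a + nat"
  assumes geometric_L: "geometric_lattice L" and diagram: "modular_diagram L (E, \<iota>, J)"
    and disjoint: "lmeet E (joinL E J) (Fiota L \<iota>) = lbot E"
    and h_inj: "inj_on h (fst (prod_lattice (below E (Fiota L \<iota>)) (below E (joinL E J))))"
begin

abbreviation "F \<equiv> Fiota L \<iota>"
abbreviation "G \<equiv> joinL E J"
abbreviation "P \<equiv> prod_lattice (below E F) (below E G)"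

definition "E' = image_lattice h P"
definition "\<iota>' = h \<circ> (\<lambda>a. (\<iota> a, lbot E))"
definition "J' = map (\<lambda>H. h (lbot E, H)) J"

lemma extension: "modular_extension L E \<iota>" and atoms_J: "set J \<subseteq> atoms E"
  using diagram unfolding modular_diagram_def by auto

sublocale E: geometric E using modular_extensionD(1)[OF geometric_L extension] .

lemma J_closed: "set J \<subseteq> fst E" using atoms_J unfolding atoms_def by auto

sublocale E1: lower_interval E F
  using lower_intervalI E.geometric modular_extensionD(3)[OF geometric_L extension] .
sublocale E2: lower_interval E G using lower_intervalI E.geometric E.joinL_closed[OF J_closed] .
sublocale PP: geometric_product "below E F" "below E G" using geometric_productI[OF E1.below_geometric E2.below_geometric] .
sublocale H: geometric_isomorphism P E' h
  unfolding E'_def using geometric_isomorphismI[OF PP.prod_geometric lattice_iso_image_lattice[OF h_inj]] .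

lemma Fiota_split: "Fiota L \<iota>' = h (F, lbot E)"
  unfolding Fiota_def \<iota>'_def by simp

lemma split_modular_diagram: "modular_diagram L (E', \<iota>', J')"
proof -
  have "modular_embedding L E' \<iota>'"
    using H.modular_embedding_comp[OF PP.modular_embedding_first_factor[OF geometric_L
        modular_extension_iso_below[OF geometric_L extension]]]
    unfolding \<iota>'_def E2.below_bot .
  moreover have "(lbot E, H) \<in> atoms P" if "H \<in> set J" for H
    using that atoms_J J_closed E.joinL_upper[OF J_closed] E2.below_atoms PP.atom_right[of H] E1.below_bot
    by (auto simp: below_def)
  then have "set J' \<subseteq> atoms E'" unfolding J'_def H.map_atoms by auto
  ultimately show ?thesis
    unfolding modular_diagram_def modular_extension_iff_embedding by simp
qed

lemma split_zero_R4:
  assumes NT: "nontrivial_lattice L" and Jne: "J \<noteq> []"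
  shows "zero_R4 L (E', \<iota>', J')"
proof -
  have "F \<noteq> lbot E"
  proof -
    interpret L: geometric L using geometricI[OF geometric_L] .
    have "inj_on \<iota> (fst L)" using modular_extensionD(2)[OF geometric_L extension] unfolding lattice_embedding_def by blast
    then show ?thesis using NT L.nontrivial_iff_top_ne_bot modular_extension_bot[OF geometric_L extension]
      unfolding Fiota_def inj_on_def by (metis L.bot_closed L.top_closed)
  qed
  then have nt1: "nontrivial_lattice (below E F)" using E1.D.nontrivial_iff_top_ne_bot E1.below_top E1.below_bot by simp
  obtain H where H: "H \<in> set J" using Jne by (cases J) auto
  then have "rk E H = 1" "H \<in> fst E" "snd E H G" using atoms_J J_closed E.joinL_upper[OF J_closed] unfolding atoms_def by auto
  then have "G \<noteq> lbot E" using E.rk_mono E.bot_closed E.rk_bot E.joinL_closed[OF J_closed] by fastforce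
  then have nt2: "nontrivial_lattice (below E G)" using E2.D.nontrivial_iff_top_ne_bot E2.below_top E2.below_bot by simp
  have "H.inv\<psi> (Fiota L \<iota>') \<in> fst (below E F) \<times> {lbot (below E G)}"
    unfolding Fiota_split using H.inv_apply E1.D.top_closed E2.D.bot_closed
    by (simp add: PP.prod_carrier E1.below_top E2.below_bot)
  moreover have "lattice_iso E' P H.inv\<psi>"
    unfolding H.inv\<psi>_def using lattice_iso_inverse[OF H.iso] .
  ultimately have "\<exists>(E1 :: ('a + nat) lat) (E2 :: ('a + nat) lat) \<psi>.
      geometric_lattice E1 \<and> geometric_lattice E2 \<and> nontrivial_lattice E1 \<and> nontrivial_lattice E2 \<and>
      lattice_iso E' (prod_lattice E1 E2) \<psi> \<and> \<psi> (Fiota L \<iota>') \<in> fst E1 \<times> {lbot E2}"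
    by - (rule exI[of _ "below E F"], rule exI[of _ "below E G"], rule exI[of _ H.inv\<psi>],
        use nt1 nt2 E1.below_geometric E2.below_geometric in blast)
  then show ?thesis unfolding zero_R4_def using split_modular_diagram by simp
qed

lemma split_rel_R2:
  assumes spanning: "ljoin E F G = ltop E"
  shows "rel_R2 L (E', \<iota>', J') (E, \<iota>, J)"
proof -
  have FG: "lmeet E G F = lbot E" using disjoint .
  have F_closed: "F \<in> fst E" and mF: "modular_flat E F" using modular_extensionD[OF geometric_L extension] by auto
  define \<phi> where "\<phi> = (\<lambda>p. ljoin E (fst p) (snd p)) \<circ> H.inv\<psi>"
  have "lattice_embedding E' E \<phi>"
    unfolding \<phi>_def by (rule H.embedding_comp_inverse[OF E.join_embedding_disjoint_modular[OF F_closed E2.F_closed mF FG]])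
  moreover have "rk E' (ltop E') = rk E (ltop E)"
    using H.map_rk[OF PP.C.top_closed] H.map_top E.rk_top_prod_below_disjoint_modular[OF F_closed E2.F_closed mF FG] spanning by simp
  moreover have "\<forall>x\<in>fst L. \<iota> x = \<phi> (\<iota>' x)"
  proof
    fix x assume that: "x \<in> fst L"
    have "\<iota> x \<in> fst (below E F)" using that modular_extensionD(5)[OF geometric_L extension] by blast
    then have "(\<iota> x, lbot E) \<in> fst P" using E2.D.bot_closed by (simp add: PP.prod_carrier E2.below_bot)
    then show "\<iota> x = \<phi> (\<iota>' x)" using H.inv_apply E.join_bot_right E1.below_in_carrier \<open>\<iota> x \<in> fst (below E F)\<close>
      unfolding \<phi>_def \<iota>'_def by simp
  qed
  moreover have "J = map \<phi> J'"
  proof -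
    have "\<phi> (h (lbot E, H)) = H" if "H \<in> set J" for H
    proof -
      have "H \<in> fst (below E G)" using that J_closed E.joinL_upper[OF J_closed] by (auto simp: E2.below_carrier)
      then have "(lbot E, H) \<in> fst P" using E1.D.bot_closed by (simp add: PP.prod_carrier E1.below_bot)
      then show ?thesis using H.inv_apply E.join_bot_left E2.below_in_carrier \<open>H \<in> fst (below E G)\<close>
        unfolding \<phi>_def by simp
    qed
    then show ?thesis unfolding J'_def by (induction J) auto
  qed
  ultimately show ?thesis unfolding rel_R2_def using split_modular_diagram diagram by blast
qed

end

lemma nonempty_grading_zero_diagram_vanishes:
  fixes L :: "'a lat" and E :: "('a + nat) lat"
  assumes GLL: "geometric_lattice L" and NT: "nontrivial_lattice L"
    and md: "modular_diagram L (E, \<iota>, J)" and Jne: "J \<noteq> []" and gz: "grading_zero L (E, \<iota>, J)"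
  shows "md_basis (E, \<iota>, J) \<in> md_relspan L"
proof -
  have me: "modular_extension L E \<iota>" and J: "set J \<subseteq> fst E"
    using md unfolding modular_diagram_def atoms_def by auto
  interpret E: geometric E using modular_extensionD(1)[OF GLL me] .
  show ?thesis
  proof (cases "ljoin E (Fiota L \<iota>) (joinL E J) = ltop E")
    case False
    then have "zero_R3 L (E, \<iota>, J)" unfolding zero_R3_def llt_def
      using md E.top_greatest E.join_closed E.joinL_closed[OF J] modular_extensionD(3)[OF GLL me] by simp
    then show ?thesis using zero_relation_in_relspan by blast
  next
    case True
    let ?P = "prod_lattice (below E (Fiota L \<iota>)) (below E (joinL E J))"
    have "finite (fst ?P)" using E.finite_carrier by (simp add: prod_lattice_def below_def)
    then obtain f :: "('a + nat) \<times> ('a + nat) \<Rightarrow> nat" where "inj_on f (fst ?P)"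
      using finite_imp_inj_to_nat_seg by blast
    then interpret S: disjoint_split L E \<iota> J "Inr \<circ> f"
      using GLL md grading_zero_disjoint[OF GLL me J gz] by unfold_locales (simp_all add: inj_on_def)
    have "md_basis (S.E', S.\<iota>', S.J') \<in> md_relspan L"
      using zero_relation_in_relspan S.split_zero_R4[OF NT Jne] by blast
    moreover have "md_basis (S.E', S.\<iota>', S.J') - md_basis (E, \<iota>, J) \<in> md_relspan L"
      using rel_R2_in_relspan[OF S.split_rel_R2[OF True]] .
    ultimately show ?thesis unfolding relspan_eq using fm.span_diff by fastforce
  qed
qed

definition inl_lattice :: "'a lat \<Rightarrow> ('a + nat) lat" where
  "inl_lattice L = (Inl ` fst L, \<lambda>x y. \<exists>a b. x = Inl a \<and> y = Inl b \<and> snd L a b)"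

lemma empty_diagram_eq: "empty_diagram L = (inl_lattice L, Inl, [])"
  unfolding empty_diagram_def inl_lattice_def by simp

lemma lattice_iso_inl: "lattice_iso L (inl_lattice L) Inl"
  unfolding lattice_iso_def inl_lattice_def by (auto simp: bij_betw_def)

lemma (in geometric) modular_embedding_id: "modular_embedding L L id"
  unfolding modular_embedding_def
proof (intro conjI bexI)
  show "geometric_lattice L" by (rule geometric)
  show "lattice_embedding L L id" unfolding lattice_embedding_def by simp
  show "ltop L \<in> fst L" by simp
  show "modular_flat L (ltop L)" unfolding modular_flat_def using meet_top_left join_top_left by simp
  show "id ` fst L = {x \<in> fst L. snd L (lbot L) x \<and> snd L x (ltop L)}" using bot_least top_greatest by auto
qed

lemma empty_diagram_modular:
  assumes "geometric_lattice L"
  shows "modular_diagram L (empty_diagram L)"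
proof -
  interpret I: geometric_isomorphism L "inl_lattice L" Inl
    using geometric_isomorphismI[OF assms lattice_iso_inl] .
  have "modular_embedding L (inl_lattice L) Inl"
    using I.modular_embedding_comp[OF I.modular_embedding_id] by simp
  then show ?thesis unfolding empty_diagram_eq modular_diagram_def modular_extension_iff_embedding by simp
qed

lemma empty_diagram_meet:
  assumes "geometric_lattice L"
  shows "lmeet (inl_lattice L) (joinL (inl_lattice L) []) (Fiota L Inl) = Inl (lbot L)"
proof -
  interpret I: geometric_isomorphism L "inl_lattice L" Inl
    using geometric_isomorphismI[OF assms lattice_iso_inl] .
  show ?thesis unfolding joinL_def Fiota_def using I.B.meet_bot_left I.in_carrier[OF I.top_closed] I.map_bot by simp
qed

lemma empty_diagram_grading_zero:
  assumes "geometric_lattice L"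
  shows "grading_zero L (empty_diagram L)"
proof -
  interpret L: geometric L using geometricI[OF assms] .
  show ?thesis unfolding grading_zero_def empty_diagram_eq
    using empty_diagram_meet[OF assms] the_inv_into_f_f[of Inl "fst L" "lbot L"] by simp
qed

lemma empty_diagram_degree:
  assumes "geometric_lattice L"
  shows "diagram_degree L (empty_diagram L) = 0"
proof -
  interpret I: geometric_isomorphism L "inl_lattice L" Inl
    using geometric_isomorphismI[OF assms lattice_iso_inl] .
  show ?thesis unfolding diagram_degree_def empty_diagram_eq
    using empty_diagram_meet[OF assms] I.map_bot by (simp add: joinL_def)
qed

lemma lattice_embedding_rk_le:
  assumes GE: "geometric_lattice E" and GE': "geometric_lattice E'" and emb: "lattice_embedding E E' \<phi>"
  shows "x \<in> fst E \<Longrightarrow> rk E x \<le> rk E' (\<phi> x)"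
proof (induction "rk E x" arbitrary: x rule: less_induct)
  case less
  interpret E: geometric E using geometricI[OF GE] .
  interpret E': geometric E' using geometricI[OF GE'] .
  have inj: "inj_on \<phi> (fst E)" and im: "\<phi> ` fst E \<subseteq> fst E'"
    and mono: "\<And>x y. x \<in> fst E \<Longrightarrow> y \<in> fst E \<Longrightarrow> snd E x y \<Longrightarrow> snd E' (\<phi> x) (\<phi> y)"
    using emb unfolding lattice_embedding_def by auto
  show ?case
  proof (cases "x = lbot E")
    case False
    then have "llt E (lbot E) x" using E.bot_least less.prems unfolding llt_def by simp
    then obtain z where z: "z \<in> fst E" "covers E z x" using E.ex_cover_below[OF E.bot_closed less.prems] by blast
    have rz: "rk E x = Suc (rk E z)" using E.rk_cover[OF z(2)] .
    have "llt E z x" using z unfolding covers_def by simp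
    then have "llt E' (\<phi> z) (\<phi> x)" using mono[OF z(1) less.prems] inj z(1) less.prems
      unfolding llt_def inj_on_def by blast
    then have "rk E' (\<phi> z) < rk E' (\<phi> x)" using E'.rk_strict im z(1) less.prems by blast
    moreover have "rk E z \<le> rk E' (\<phi> z)" using less.hyps[of z] rz z(1) by simp
    ultimately show ?thesis using rz by simp
  qed simp
qed

lemma lattice_embedding_top:
  assumes GE: "geometric_lattice E" and GE': "geometric_lattice E'" and emb: "lattice_embedding E E' \<phi>"
    and rk: "rk E (ltop E) = rk E' (ltop E')"
  shows "\<phi> (ltop E) = ltop E'"
proof -
  interpret E: geometric E using geometricI[OF GE] .
  interpret E': geometric E' using geometricI[OF GE'] .
  have "\<phi> (ltop E) \<in> fst E'" using emb E.top_closed unfolding lattice_embedding_def by blast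
  then show ?thesis
    using E'.rk_eq E'.top_closed E'.top_greatest lattice_embedding_rk_le[OF GE GE' emb E.top_closed] rk
    by simp
qed

definition full_empty :: "'a lat \<Rightarrow> 'a diagram \<Rightarrow> bool" where
  "full_empty L D \<longleftrightarrow> snd (snd D) = [] \<and> Fiota L (fst (snd D)) = ltop (fst D)"

lemma rel_R2_full_empty_iff:
  assumes GLL: "geometric_lattice L" and r: "rel_R2 L D D'"
  shows "full_empty L D \<longleftrightarrow> full_empty L D'"
proof -
  obtain E \<iota> J E' \<iota>' J' \<phi> where D: "D = (E, \<iota>, J)" "D' = (E', \<iota>', J')"
    and emb: "lattice_embedding E E' \<phi>" and rk: "rk E (ltop E) = rk E' (ltop E')"
    and io: "\<forall>x\<in>fst L. \<iota>' x = \<phi> (\<iota> x)" and JJ: "J' = map \<phi> J"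
    and md: "modular_diagram L (E, \<iota>, J)" "modular_diagram L (E', \<iota>', J')"
    using r unfolding rel_R2_def by blast
  then have me: "modular_extension L E \<iota>" "modular_extension L E' \<iota>'" unfolding modular_diagram_def by auto
  then have GE: "geometric_lattice E" "geometric_lattice E'" unfolding modular_extension_def by auto
  interpret L: geometric L using geometricI[OF GLL] .
  interpret E: geometric E using geometricI[OF GE(1)] .
  have "inj_on \<phi> (fst E)" using emb unfolding lattice_embedding_def by blast
  moreover have "Fiota L \<iota>' = \<phi> (Fiota L \<iota>)" unfolding Fiota_def using io by simp
  moreover have "\<phi> (ltop E) = ltop E'" using lattice_embedding_top[OF GE emb rk] .
  ultimately have "Fiota L \<iota> = ltop E \<longleftrightarrow> Fiota L \<iota>' = ltop E'"
    using modular_extensionD(3)[OF GLL me(1)] E.top_closed unfolding inj_on_def by metis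
  then show ?thesis unfolding full_empty_def D JJ by simp
qed

lemma zero_R3_not_full_empty:
  assumes GLL: "geometric_lattice L" and z: "zero_R3 L D"
  shows "\<not> full_empty L D"
proof
  assume full: "full_empty L D"
  obtain E \<iota> J where D: "D = (E, \<iota>, J)" by (cases D) auto
  have md: "modular_diagram L D" and lt: "llt E (ljoin E (Fiota L \<iota>) (joinL E J)) (ltop E)"
    using z D unfolding zero_R3_def by auto
  have me: "modular_extension L E \<iota>" using md D unfolding modular_diagram_def by auto
  interpret E: geometric E using modular_extensionD(1)[OF GLL me] .
  have "J = []" "Fiota L \<iota> = ltop E" using full D unfolding full_empty_def by auto
  then show False using lt E.join_top_left E.bot_closed unfolding llt_def by (simp add: joinL_def)
qed

lemma zero_R4_not_full_empty:
  assumes GLL: "geometric_lattice L" and z: "zero_R4 L D"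
  shows "\<not> full_empty L D"
proof
  assume full: "full_empty L D"
  obtain E \<iota> J where D: "D = (E, \<iota>, J)" by (cases D) auto
  obtain E1 E2 :: "('a + nat) lat" and \<psi> where z': "geometric_lattice E1" "geometric_lattice E2"
    "nontrivial_lattice E2" "lattice_iso E (prod_lattice E1 E2) \<psi>" "\<psi> (Fiota L \<iota>) \<in> fst E1 \<times> {lbot E2}"
    using z D unfolding zero_R4_def by auto
  have "modular_extension L E \<iota>" using z D unfolding zero_R4_def modular_diagram_def by auto
  then interpret I: lattice_isomorphism E "prod_lattice E1 E2" \<psi>
    using lattice_isomorphismI modular_extensionD(1)[OF GLL] z'(4)
    unfolding geometric_def finite_lattice_def by blast
  interpret P: geometric_product E1 E2 using geometric_productI[OF z'(1,2)] .
  have "\<psi> (Fiota L \<iota>) = (ltop E1, ltop E2)" using full D I.map_top P.prod_top unfolding full_empty_def by simp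
  then have "ltop E2 = lbot E2" using z'(5) by simp
  then show False using z'(3) P.B.nontrivial_iff_top_ne_bot by simp
qed

lemma zero_R5_not_full_empty: "zero_R5 L D \<Longrightarrow> \<not> full_empty L D"
  unfolding zero_R5_def full_empty_def by (auto split: prod.splits)

lemma rel_R1_not_full_empty: "rel_R1 L D D' \<Longrightarrow> \<not> full_empty L D \<and> \<not> full_empty L D'"
  unfolding rel_R1_def full_empty_def by auto

definition full_empty_support :: "'a lat \<Rightarrow> ('a diagram \<Rightarrow> rat) \<Rightarrow> 'a diagram set" where
  "full_empty_support L f = {X. full_empty L X \<and> f X \<noteq> 0}"

definition full_empty_weight :: "'a lat \<Rightarrow> ('a diagram \<Rightarrow> rat) \<Rightarrow> rat" where
  "full_empty_weight L f = (\<Sum>X\<in>full_empty_support L f. f X)"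

definition weight_zero :: "'a lat \<Rightarrow> ('a diagram \<Rightarrow> rat) set" where
  "weight_zero L = {f. finite (full_empty_support L f) \<and> full_empty_weight L f = 0}"

lemma full_empty_weight_eq_sum: assumes "finite U" "full_empty_support L f \<subseteq> U"
  shows "full_empty_weight L f = (\<Sum>X\<in>{X\<in>U. full_empty L X}. f X)"
  unfolding full_empty_weight_def
proof (rule sum.mono_neutral_left)
  show "finite {X \<in> U. full_empty L X}" using assms(1) by simp
  show "full_empty_support L f \<subseteq> {X \<in> U. full_empty L X}" using assms(2) unfolding full_empty_support_def by auto
  show "\<forall>i\<in>{X \<in> U. full_empty L X} - full_empty_support L f. f i = 0" unfolding full_empty_support_def by auto
qed

lemma weight_zero_subspace: "fm.subspace (weight_zero L)"
  unfolding fm.subspace_def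
proof (intro conjI ballI allI)
  show "0 \<in> weight_zero L" unfolding weight_zero_def full_empty_weight_def full_empty_support_def by simp
  fix f g assume f: "f \<in> weight_zero L" and g: "g \<in> weight_zero L"
  let ?U = "full_empty_support L f \<union> full_empty_support L g"
  have fU: "finite ?U" using f g unfolding weight_zero_def by auto
  have s: "full_empty_support L (f + g) \<subseteq> ?U" unfolding full_empty_support_def by auto
  have "full_empty_weight L (f + g) = (\<Sum>X\<in>{X\<in>?U. full_empty L X}. f X + g X)" using full_empty_weight_eq_sum[OF fU s] by simp
  also have "\<dots> = (\<Sum>X\<in>{X\<in>?U. full_empty L X}. f X) + (\<Sum>X\<in>{X\<in>?U. full_empty L X}. g X)" by (rule sum.distrib)
  also have "\<dots> = full_empty_weight L f + full_empty_weight L g" using full_empty_weight_eq_sum[OF fU, where f=f] full_empty_weight_eq_sum[OF fU, where f=g] by auto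
  finally show "f + g \<in> weight_zero L" using f g fU s finite_subset unfolding weight_zero_def by auto
next
  fix c :: rat and f assume f: "f \<in> weight_zero L"
  let ?U = "full_empty_support L f"
  have fU: "finite ?U" using f unfolding weight_zero_def by auto
  have s: "full_empty_support L (\<lambda>X. c * f X) \<subseteq> ?U" unfolding full_empty_support_def by auto
  have "full_empty_weight L (\<lambda>X. c * f X) = (\<Sum>X\<in>{X\<in>?U. full_empty L X}. c * f X)" using full_empty_weight_eq_sum[OF fU s] by simp
  also have "\<dots> = c * (\<Sum>X\<in>{X\<in>?U. full_empty L X}. f X)" by (simp add: sum_distrib_left)
  also have "\<dots> = c * full_empty_weight L f" using full_empty_weight_eq_sum[OF fU, where f=f] by auto
  finally show "(\<lambda>X. c * f X) \<in> weight_zero L" using f fU s finite_subset unfolding weight_zero_def by auto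
qed

lemma md_basis_full_empty_support: "full_empty_support L (md_basis D) \<subseteq> {D}" unfolding full_empty_support_def md_basis_def by auto

lemma md_basis_weight_zero: "\<not> full_empty L D \<Longrightarrow> md_basis D \<in> weight_zero L"
proof -
  assume ng: "\<not> full_empty L D"
  have "full_empty_support L (md_basis D) = {}" using md_basis_full_empty_support[of L D] ng unfolding full_empty_support_def by auto
  then show ?thesis unfolding weight_zero_def full_empty_weight_def by simp
qed

lemma rel_R2_weight_zero:
  assumes GLL: "geometric_lattice L" and r: "rel_R2 L D D'"
  shows "md_basis D - md_basis D' \<in> weight_zero L"
proof -
  have U: "finite {D, D'}" "full_empty_support L (md_basis D - md_basis D') \<subseteq> {D, D'}"
    unfolding full_empty_support_def md_basis_def by auto
  have "full_empty_weight L (md_basis D - md_basis D') = 0"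
  proof (cases "full_empty L D")
    case False
    then have e: "{X \<in> {D, D'}. full_empty L X} = {}" using rel_R2_full_empty_iff[OF GLL r] by auto
    show ?thesis using full_empty_weight_eq_sum[OF U, unfolded e] by simp
  next
    case True
    then have e: "{X \<in> {D, D'}. full_empty L X} = {D, D'}" using rel_R2_full_empty_iff[OF GLL r] by auto
    show ?thesis using full_empty_weight_eq_sum[OF U, unfolded e] by (cases "D = D'") (simp_all add: md_basis_def)
  qed
  then show ?thesis using finite_subset[OF U(2) U(1)] unfolding weight_zero_def by simp
qed

lemma md_relations_weight_zero:
  assumes GLL: "geometric_lattice L"
  shows "md_relations L \<subseteq> weight_zero L"
proof
  fix f assume "f \<in> md_relations L"
  then consider (r1) D D' where "f = md_basis D + md_basis D'" "rel_R1 L D D'"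
    | (r2) D D' where "f = md_basis D - md_basis D'" "rel_R2 L D D'"
    | (zero) D where "f = md_basis D" "zero_R3 L D \<or> zero_R4 L D \<or> zero_R5 L D"
    unfolding md_relations_def by blast
  then show "f \<in> weight_zero L"
  proof cases
    case zero
    then have "\<not> full_empty L D"
      using zero_R3_not_full_empty[OF GLL] zero_R4_not_full_empty[OF GLL] zero_R5_not_full_empty by blast
    then show ?thesis using zero md_basis_weight_zero by simp
  next
    case r1
    have U: "finite {D, D'}" "full_empty_support L f \<subseteq> {D, D'}"
      using r1 unfolding full_empty_support_def md_basis_def by auto
    have e: "{X \<in> {D, D'}. full_empty L X} = {}" using rel_R1_not_full_empty[OF r1(2)] by auto
    show ?thesis
      using full_empty_weight_eq_sum[OF U, unfolded e] finite_subset[OF U(2) U(1)] unfolding weight_zero_def by simp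
  next
    case r2
    then show ?thesis using rel_R2_weight_zero[OF GLL] by simp
  qed
qed

lemma empty_diagram_not_in_relspan:
  assumes GLL: "geometric_lattice L"
  shows "md_basis (empty_diagram L) \<notin> md_relspan L"
proof
  assume "md_basis (empty_diagram L) \<in> md_relspan L"
  then have "md_basis (empty_diagram L) \<in> weight_zero L"
    using fm.span_minimal[OF md_relations_weight_zero[OF GLL] weight_zero_subspace] unfolding relspan_eq by blast
  moreover have "full_empty L (empty_diagram L)"
  proof -
    interpret I: geometric_isomorphism L "inl_lattice L" Inl
      using geometric_isomorphismI[OF GLL lattice_iso_inl] .
    show ?thesis unfolding full_empty_def empty_diagram_eq Fiota_def using I.map_top by simp
  qed
  ultimately have "full_empty_weight L (md_basis (empty_diagram L)) = 0"
    "full_empty_support L (md_basis (empty_diagram L)) = {empty_diagram L}"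
    unfolding weight_zero_def full_empty_support_def md_basis_def by auto
  then show False unfolding full_empty_weight_def md_basis_def by simp
qed

lemma empty_diagram_rel_R2:
  assumes GLL: "geometric_lattice L" and md: "modular_diagram L (E, \<iota>, [])"
    and full: "Fiota L \<iota> = ltop E"
  shows "rel_R2 L (empty_diagram L) (E, \<iota>, [])"
proof -
  have me: "modular_extension L E \<iota>" using md unfolding modular_diagram_def by simp
  interpret L: geometric L using geometricI[OF GLL] .
  interpret I: geometric_isomorphism L "inl_lattice L" Inl
    using geometric_isomorphismI[OF GLL lattice_iso_inl] .
  have "lattice_embedding (inl_lattice L) E (\<iota> \<circ> I.inv\<psi>)"
    using I.embedding_comp_inverse modular_extensionD(2)[OF GLL me] .
  moreover have "rk (inl_lattice L) (ltop (inl_lattice L)) = rk E (ltop E)"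
    using I.map_top I.map_rk[OF L.top_closed] modular_extension_rk[OF GLL me L.top_closed] full
    unfolding Fiota_def by simp
  ultimately show ?thesis
    unfolding rel_R2_def empty_diagram_eq
    using empty_diagram_modular[OF GLL] md I.inv_apply unfolding empty_diagram_eq by auto
qed

lemma grading_zero_diagram_multiple_of_empty:
  fixes L :: "'a lat"
  assumes GLL: "geometric_lattice L" and NT: "nontrivial_lattice L"
    and md: "modular_diagram L D" and gz: "grading_zero L D"
  shows "\<exists>c::rat. (\<lambda>X. md_basis D X - c * md_basis (empty_diagram L) X) \<in> md_relspan L"
proof -
  obtain E \<iota> J where D: "D = (E, \<iota>, J)" by (cases D) auto
  have md': "modular_diagram L (E, \<iota>, J)" using md D by simp
  have me: "modular_extension L E \<iota>" using md' unfolding modular_diagram_def by simp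
  interpret E: geometric E using modular_extensionD(1)[OF GLL me] .
  have F_closed: "Fiota L \<iota> \<in> fst E" using modular_extensionD(3)[OF GLL me] .
  consider (nonempty) "J \<noteq> []" | (small) "J = []" "Fiota L \<iota> \<noteq> ltop E" | (full) "J = []" "Fiota L \<iota> = ltop E"
    by blast
  then show ?thesis
  proof cases
    case nonempty
    then have "md_basis D \<in> md_relspan L"
      using nonempty_grading_zero_diagram_vanishes[OF GLL NT md'] gz D by simp
    then show ?thesis by (intro exI[of _ 0]) simp
  next
    case small
    then have "zero_R3 L D" unfolding zero_R3_def llt_def
      using md' D E.top_greatest[OF F_closed] E.join_bot_right[OF F_closed] by (simp add: joinL_def)
    then have "md_basis D \<in> md_relspan L" using zero_relation_in_relspan by blast
    then show ?thesis by (intro exI[of _ 0]) simp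
  next
    case full
    then have "rel_R2 L (empty_diagram L) D" using empty_diagram_rel_R2[OF GLL] md D by simp
    then have "- (md_basis (empty_diagram L) - md_basis D) \<in> md_relspan L"
      using rel_R2_in_relspan unfolding relspan_eq by (blast intro: fm.span_neg)
    moreover have "- (md_basis (empty_diagram L) - md_basis D) =
        (\<lambda>X. md_basis D X - 1 * md_basis (empty_diagram L) X)" by (simp add: fun_eq_iff)
    ultimately show ?thesis by (intro exI[of _ 1]) simp
  qed
qed

lemma nonzero_degree_grading_zero_diagram_vanishes:
  fixes L :: "'a lat"
  assumes GLL: "geometric_lattice L" and NT: "nontrivial_lattice L"
    and md: "modular_diagram L D" and gz: "grading_zero L D" and deg: "diagram_degree L D \<noteq> 0"
  shows "md_basis D \<in> md_relspan L"
proof -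
  obtain E \<iota> J where D: "D = (E, \<iota>, J)" by (cases D) auto
  have me: "modular_extension L E \<iota>" using md D unfolding modular_diagram_def by simp
  interpret E: geometric E using modular_extensionD(1)[OF GLL me] .
  have "J \<noteq> []"
    using deg E.meet_bot_left[OF modular_extensionD(3)[OF GLL me]]
    unfolding D diagram_degree_def by (auto simp: joinL_def)
  then show ?thesis using nonempty_grading_zero_diagram_vanishes[OF GLL NT] md gz D by simp
qed

theorem mainTheorem11:
  fixes L :: "'a lat"
  assumes "geometric_lattice L" and "nontrivial_lattice L"
  shows "(\<forall>D. modular_diagram L D \<and> snd (snd D) \<noteq> [] \<and> grading_zero L D
              \<longrightarrow> md_basis D \<in> md_relspan L)
    \<and> modular_diagram L (empty_diagram L) \<and> grading_zero L (empty_diagram L)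
    \<and> diagram_degree L (empty_diagram L) = 0
    \<and> md_basis (empty_diagram L) \<notin> md_relspan L
    \<and> (\<forall>D. modular_diagram L D \<and> grading_zero L D
              \<longrightarrow> (\<exists>c::rat. (\<lambda>X. md_basis D X - c * md_basis (empty_diagram L) X) \<in> md_relspan L))
    \<and> (\<forall>D. modular_diagram L D \<and> grading_zero L D \<and> diagram_degree L D \<noteq> 0
              \<longrightarrow> md_basis D \<in> md_relspan L)"
proof (intro conjI allI impI)
  fix D assume "modular_diagram L D \<and> snd (snd D) \<noteq> [] \<and> grading_zero L D"
  then show "md_basis D \<in> md_relspan L"
    using nonempty_grading_zero_diagram_vanishes[OF assms] by (cases D) auto
next
  show "modular_diagram L (empty_diagram L)" using empty_diagram_modular[OF assms(1)] .
  show "grading_zero L (empty_diagram L)" using empty_diagram_grading_zero[OF assms(1)] .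
  show "diagram_degree L (empty_diagram L) = 0" using empty_diagram_degree[OF assms(1)] .
  show "md_basis (empty_diagram L) \<notin> md_relspan L" using empty_diagram_not_in_relspan[OF assms(1)] .
next
  fix D assume "modular_diagram L D \<and> grading_zero L D"
  then show "\<exists>c::rat. (\<lambda>X. md_basis D X - c * md_basis (empty_diagram L) X) \<in> md_relspan L"
    using grading_zero_diagram_multiple_of_empty[OF assms] by blast
next
  fix D assume "modular_diagram L D \<and> grading_zero L D \<and> diagram_degree L D \<noteq> 0"
  then show "md_basis D \<in> md_relspan L"
    using nonzero_degree_grading_zero_diagram_vanishes[OF assms] by blast
qed

end
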